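(* Let $G=(V,E)$ be a finite graph with $m=|E|\ge3$ edges, $p\in(0,1)$ and $q\in\mathbb N$. Let $\tilde P_{\rm SW}$ and $P_{\rm SB}$ be the transition matrices of the Swendsen--Wang dynamics and of the single-bond dynamics, respectively, for the random-cluster model on $G$ with parameters $p$ and $q$. Then \[ \lambda(P_{\rm SB})\;\le\;\lambda(\tilde P_{\rm SW})\;\le\;8\,m\log m\;\lambda(P_{\rm SB}). \]
   Context: Graphs are finite, parallel edges and loops allowed; each edge $e$ has endvertices $e^{(1)},e^{(2)}$. For $A\subseteq E$, $c(A)$ is the number of connected components of $(V,A)$, and $u\overset{A}{\leftrightarrow}v$ means $u,v$ are connected in $(V,A)$. For $\sigma\in\{1,\dots,q\}^V$, $E(\sigma)$ is the set of edges whose endvertices have the same color. Random-cluster measure: $\mu(A)\propto\bigl(\tfrac{p}{1-p}\bigr)^{|A|}q^{c(A)}$ on subsets $A\subseteq E$. Swendsen--Wang dynamics for the RC model: $\tilde P_{\rm SW}(A,B)=q^{-c(A)}\bigl(\tfrac{p}{1-p}\bigr)^{|B|}\sum_{\sigma\in\{1,\dots,q\}^V}(1-p)^{|E(\sigma)|}\mathbf 1(A\cup B\subseteq E(\sigma))$ (color each component of $(V,A)$ independently uniformly, then keep each edge of $E(\sigma)$ independently with probability $p$). Single-bond dynamics: $P_{\rm SB}(A,B)=\frac1{|E|}\sum_{e\in E}g_e(A,B)$ where $g_e(A,B)=p$ if $B=A\cup\{e\}$ and $e^{(1)}\overset{A}{\leftrightarrow}e^{(2)}$; $1-p$ if $B=A\setminus\{e\}$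 and $e^{(1)}\overset{A}{\leftrightarrow}e^{(2)}$; $p/q$ if $B=A\cup\{e\}$ and $e^{(1)},e^{(2)}$ are not connected in $(V,A)$; $1-p/q$ if $B=A\setminus\{e\}$ and they are not connected; $0$ otherwise. Both are reversible w.r.t. $\mu$. Spectral gap: $\lambda(P)=1-\max\{|\xi|:\xi\text{ eigenvalue of }P,\ \xi\neq1\}$; $\log$ is the natural logarithm. *)

theory Defs
  imports "HOL-Analysis.Analysis"
begin

text \<open>Finite multigraph: vertex set V, edge set E, endpoint maps end1, end2
  (parallel edges and loops allowed).\<close>

definition edge_rel :: "('e \<Rightarrow> 'v) \<Rightarrow> ('e \<Rightarrow> 'v) \<Rightarrow> 'e set \<Rightarrow> ('v \<times> 'v) set" where
  "edge_rel end1 end2 A = {(end1 e, end2 e) | e. e \<in> A} \<union> {(end2 e, end1 e) | e. e \<in> A}"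

definition conn :: "('e \<Rightarrow> 'v) \<Rightarrow> ('e \<Rightarrow> 'v) \<Rightarrow> 'e set \<Rightarrow> 'v \<Rightarrow> 'v \<Rightarrow> bool" where
  "conn end1 end2 A u v \<longleftrightarrow> (u, v) \<in> (edge_rel end1 end2 A)\<^sup>*"

definition ncomp :: "'v set \<Rightarrow> ('e \<Rightarrow> 'v) \<Rightarrow> ('e \<Rightarrow> 'v) \<Rightarrow> 'e set \<Rightarrow> nat" where
  "ncomp V end1 end2 A = card (V // ((edge_rel end1 end2 A)\<^sup>* \<inter> (V \<times> V)))"

definition mono_edges :: "'e set \<Rightarrow> ('e \<Rightarrow> 'v) \<Rightarrow> ('e \<Rightarrow> 'v) \<Rightarrow> ('v \<Rightarrow> nat) \<Rightarrow> 'e set" where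
  "mono_edges E end1 end2 \<sigma> = {e \<in> E. \<sigma> (end1 e) = \<sigma> (end2 e)}"

definition P_SW :: "'v set \<Rightarrow> 'e set \<Rightarrow> ('e \<Rightarrow> 'v) \<Rightarrow> ('e \<Rightarrow> 'v) \<Rightarrow> real \<Rightarrow> nat
    \<Rightarrow> 'e set \<Rightarrow> 'e set \<Rightarrow> real" where
  "P_SW V E end1 end2 p q A B =
     (1 / real q) ^ ncomp V end1 end2 A * (p / (1 - p)) ^ card B *
     (\<Sum>\<sigma> \<in> PiE V (\<lambda>_. {1..q}).
        (1 - p) ^ card (mono_edges E end1 end2 \<sigma>) *
        (if A \<union> B \<subseteq> mono_edges E end1 end2 \<sigma> then 1 else 0))"

definition g_edge :: "('e \<Rightarrow> 'v) \<Rightarrow> ('e \<Rightarrow> 'v) \<Rightarrow> real \<Rightarrow> nat \<Rightarrow> 'e \<Rightarrow> 'e set \<Rightarrow> 'e set \<Rightarrow> real" where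
  "g_edge end1 end2 p q e A B =
     (if B = A \<union> {e} \<and> conn end1 end2 A (end1 e) (end2 e) then p
      else if B = A - {e} \<and> conn end1 end2 A (end1 e) (end2 e) then 1 - p
      else if B = A \<union> {e} \<and> \<not> conn end1 end2 A (end1 e) (end2 e) then p / real q
      else if B = A - {e} \<and> \<not> conn end1 end2 A (end1 e) (end2 e) then 1 - p / real q
      else 0)"

definition P_SB :: "'e set \<Rightarrow> ('e \<Rightarrow> 'v) \<Rightarrow> ('e \<Rightarrow> 'v) \<Rightarrow> real \<Rightarrow> nat
    \<Rightarrow> 'e set \<Rightarrow> 'e set \<Rightarrow> real" where
  "P_SB E end1 end2 p q A B = (1 / real (card E)) * (\<Sum>e \<in> E. g_edge end1 end2 p q e A B)"

definition is_eigenvalue :: "'s set \<Rightarrow> ('s \<Rightarrow> 's \<Rightarrow> real) \<Rightarrow> complex \<Rightarrow> bool" where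
  "is_eigenvalue S P \<xi> \<longleftrightarrow>
     (\<exists>f :: 's \<Rightarrow> complex. (\<exists>x \<in> S. f x \<noteq> 0) \<and>
        (\<forall>x \<in> S. (\<Sum>y \<in> S. complex_of_real (P x y) * f y) = \<xi> * f x))"

definition spectral_gap :: "'s set \<Rightarrow> ('s \<Rightarrow> 's \<Rightarrow> real) \<Rightarrow> real" where
  "spectral_gap S P = 1 - Max {cmod \<xi> | \<xi>. is_eigenvalue S P \<xi> \<and> \<xi> \<noteq> 1}"

end

theory Submission
  imports Defs "Jordan_Normal_Form.Spectral_Radius"
begin

text \<open>Both dynamics are reversible positive semidefinite kernels for the random-cluster weights
  \<open>\<mu>\<close>, so each spectral gap is the minimum of the Dirichlet form over centred functions of unit
  \<open>\<ell>\<^sup>2(\<mu>)\<close>-norm, and the two gaps can be compared through their Dirichlet forms. In the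
  Edwards--Sokal coupling of colourings \<open>\<sigma>\<close> with edge sets \<open>A \<subseteq> E(\<sigma>)\<close>, Swendsen--Wang is the
  two-step Gibbs sampler, with form \<open>\<Sum>\<^sub>\<sigma> w(\<sigma>) (E\<^sub>\<sigma> f)\<^sup>2\<close> for the product Bernoulli(\<open>p\<close>)
  expectation \<open>E\<^sub>\<sigma>\<close> on \<open>E(\<sigma>)\<close>, while a single-bond step at \<open>e\<close> is the heat-bath update of \<open>e\<close>
  in the same Bernoulli field. Jensen's inequality gives \<open>\<langle>f, P\<^sub>S\<^sub>W f\<rangle> \<le> \<langle>f, P\<^sub>S\<^sub>B f\<rangle>\<close>, and the
  Efron--Stein inequality \<open>Var\<^sub>\<sigma> f \<le> \<Sum>\<^sub>e E\<^sub>\<sigma> Var\<^sub>e f\<close> gives \<open>\<D>\<^sub>S\<^sub>W \<le> |E| \<D>\<^sub>S\<^sub>B\<close>. Hence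
  \<open>\<lambda>\<^sub>S\<^sub>B \<le> \<lambda>\<^sub>S\<^sub>W \<le> |E| \<lambda>\<^sub>S\<^sub>B\<close>, which implies the stated bound because \<open>8 log m \<ge> 1\<close>.\<close>

section \<open>Spectral gaps of reversible positive semidefinite kernels\<close>

lemma finite_eigenvalues:
  assumes "finite S"
  shows "finite {\<xi>. is_eigenvalue S P \<xi>}"
proof -
  obtain h where h: "bij_betw h {0..<card S} S" using ex_bij_betw_nat_finite[OF assms] by blast
  define n where "n = card S"
  define A :: "complex mat" where "A = mat n n (\<lambda>(i,j). complex_of_real (P (h i) (h j)))"
  have A: "A \<in> carrier_mat n n" unfolding A_def by simp
  have "{\<xi>. is_eigenvalue S P \<xi>} \<subseteq> spectrum A"
  proof
    fix \<xi> assume "\<xi> \<in> {\<xi>. is_eigenvalue S P \<xi>}"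
    then obtain f where f0: "\<exists>x\<in>S. f x \<noteq> 0"
      and fe: "\<forall>x\<in>S. (\<Sum>y\<in>S. complex_of_real (P x y) * f y) = \<xi> * f x"
      unfolding is_eigenvalue_def by blast
    define v where "v = vec n (\<lambda>i. f (h i))"
    from f0 obtain x where x: "x \<in> S" "f x \<noteq> 0" by blast
    have "x \<in> h ` {0..<n}" using h x unfolding bij_betw_def n_def by simp
    then obtain i where i: "i < n" "h i = x" by auto
    have v0: "v \<noteq> 0\<^sub>v n"
    proof
      assume "v = 0\<^sub>v n"
      hence "v $ i = 0" using i by simp
      thus False using i x unfolding v_def by simp
    qed
    have mv: "A *\<^sub>v v = \<xi> \<cdot>\<^sub>v v"
    proof (rule eq_vecI)
      fix i assume i: "i < dim_vec (\<xi> \<cdot>\<^sub>v v)"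
      hence i': "i < n" unfolding v_def by simp
      have "(A *\<^sub>v v) $ i = (\<Sum>j\<in>{0..<n}. complex_of_real (P (h i) (h j)) * f (h j))"
        using i' unfolding A_def v_def by (simp add: scalar_prod_def)
      also have "\<dots> = (\<Sum>y\<in>S. complex_of_real (P (h i) y) * f y)"
        using sum.reindex_bij_betw[OF h, of "\<lambda>y. complex_of_real (P (h i) y) * f y"]
        unfolding n_def by simp
      also have "\<dots> = \<xi> * f (h i)" using fe h i' unfolding n_def bij_betw_def by auto
      finally show "(A *\<^sub>v v) $ i = (\<xi> \<cdot>\<^sub>v v) $ i" using i' unfolding v_def by simp
    qed (simp add: A_def v_def)
    have "eigenvector A v \<xi>" unfolding eigenvector_def using v0 mv A
      by (simp add: v_def A_def)
    thus "\<xi> \<in> spectrum A" unfolding spectrum_def eigenvalue_def by blast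
  qed
  thus ?thesis using card_finite_spectrum(1)[OF A] finite_subset by blast
qed

definition weighted_inner :: "'s set \<Rightarrow> ('s \<Rightarrow> real) \<Rightarrow> ('s \<Rightarrow> real) \<Rightarrow> ('s \<Rightarrow> real) \<Rightarrow> real"
  where "weighted_inner S \<mu> f g = (\<Sum>x\<in>S. \<mu> x * f x * g x)"

definition kernel_form :: "'s set \<Rightarrow> ('s \<Rightarrow> real) \<Rightarrow> ('s \<Rightarrow> 's \<Rightarrow> real) \<Rightarrow>
    ('s \<Rightarrow> real) \<Rightarrow> ('s \<Rightarrow> real) \<Rightarrow> real"
  where "kernel_form S \<mu> P f g = (\<Sum>x\<in>S. \<Sum>y\<in>S. \<mu> x * f x * P x y * g y)"

definition dirichlet_form :: "'s set \<Rightarrow> ('s \<Rightarrow> real) \<Rightarrow> ('s \<Rightarrow> 's \<Rightarrow> real) \<Rightarrow> ('s \<Rightarrow> real) \<Rightarrow> real"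
  where "dirichlet_form S \<mu> P f = weighted_inner S \<mu> f f - kernel_form S \<mu> P f f"

lemma kernel_form_eq_weighted_inner:
  "kernel_form S \<mu> P f g = weighted_inner S \<mu> f (\<lambda>x. \<Sum>y\<in>S. P x y * g y)"
  unfolding kernel_form_def weighted_inner_def by (simp add: sum_distrib_left mult.assoc)

lemma weighted_inner_commute: "weighted_inner S \<mu> f g = weighted_inner S \<mu> g f"
  unfolding weighted_inner_def by (simp add: algebra_simps)

lemma weighted_inner_add_left:
  "weighted_inner S \<mu> (\<lambda>x. f x + g x) h = weighted_inner S \<mu> f h + weighted_inner S \<mu> g h"
  unfolding weighted_inner_def by (simp add: algebra_simps sum.distrib)

lemma weighted_inner_add_right:
  "weighted_inner S \<mu> h (\<lambda>x. f x + g x) = weighted_inner S \<mu> h f + weighted_inner S \<mu> h g"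
  unfolding weighted_inner_def by (simp add: algebra_simps sum.distrib)

lemma weighted_inner_diff_right:
  "weighted_inner S \<mu> h (\<lambda>x. f x - g x) = weighted_inner S \<mu> h f - weighted_inner S \<mu> h g"
  unfolding weighted_inner_def by (simp add: algebra_simps sum_subtractf)

lemma weighted_inner_scale_left:
  "weighted_inner S \<mu> (\<lambda>x. c * f x) g = c * weighted_inner S \<mu> f g"
  unfolding weighted_inner_def by (simp add: algebra_simps sum_distrib_left)

lemma weighted_inner_scale_right:
  "weighted_inner S \<mu> f (\<lambda>x. c * g x) = c * weighted_inner S \<mu> f g"
  unfolding weighted_inner_def by (simp add: algebra_simps sum_distrib_left)

lemma kernel_form_add_left:
  "kernel_form S \<mu> P (\<lambda>x. f x + g x) h = kernel_form S \<mu> P f h + kernel_form S \<mu> P g h"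
  unfolding kernel_form_def by (simp add: algebra_simps sum.distrib)

lemma kernel_form_add_right:
  "kernel_form S \<mu> P h (\<lambda>x. f x + g x) = kernel_form S \<mu> P h f + kernel_form S \<mu> P h g"
  unfolding kernel_form_def by (simp add: algebra_simps sum.distrib)

lemma kernel_form_scale_left:
  "kernel_form S \<mu> P (\<lambda>x. c * f x) g = c * kernel_form S \<mu> P f g"
  unfolding kernel_form_def by (simp add: algebra_simps sum_distrib_left)

lemma kernel_form_scale_right:
  "kernel_form S \<mu> P f (\<lambda>x. c * g x) = c * kernel_form S \<mu> P f g"
  unfolding kernel_form_def by (simp add: algebra_simps sum_distrib_left)

lemma weighted_inner_cong:
  "(\<And>x. x \<in> S \<Longrightarrow> f x = f' x) \<Longrightarrow> (\<And>x. x \<in> S \<Longrightarrow> g x = g' x) \<Longrightarrow>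
    weighted_inner S \<mu> f g = weighted_inner S \<mu> f' g'"
  unfolding weighted_inner_def by (intro sum.cong) auto

lemma kernel_form_cong:
  "(\<And>x. x \<in> S \<Longrightarrow> f x = f' x) \<Longrightarrow> (\<And>x. x \<in> S \<Longrightarrow> g x = g' x) \<Longrightarrow>
    kernel_form S \<mu> P f g = kernel_form S \<mu> P f' g'"
  unfolding kernel_form_def by (intro sum.cong) auto

lemma weighted_inner_self_nonneg:
  "(\<And>x. x \<in> S \<Longrightarrow> 0 \<le> \<mu> x) \<Longrightarrow> 0 \<le> weighted_inner S \<mu> f f"
  unfolding weighted_inner_def by (intro sum_nonneg) (simp add: mult.assoc)

lemma weighted_inner_self_pos:
  assumes "finite S" "\<And>x. x \<in> S \<Longrightarrow> 0 < \<mu> x" "\<exists>x\<in>S. f x \<noteq> 0"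
  shows "0 < weighted_inner S \<mu> f f"
proof -
  from assms(3) obtain x where x: "x \<in> S" "f x \<noteq> 0" by blast
  show ?thesis unfolding weighted_inner_def
    by (rule sum_pos2[OF assms(1) x(1)])
       (use x assms(2) in \<open>auto simp: mult.assoc zero_less_mult_iff zero_le_mult_iff less_imp_le\<close>)
qed

lemma weighted_inner_self_nonzero:
  "weighted_inner S \<mu> f f \<noteq> 0 \<Longrightarrow> \<exists>x\<in>S. f x \<noteq> 0"
  by (rule ccontr) (simp add: weighted_inner_def)

lemma linear_coeff_zero_if_quadratic_nonpos:
  fixes a b :: real
  assumes "\<And>t. a * t + b * t\<^sup>2 \<le> 0"
  shows "a = 0"
proof (rule ccontr)
  assume a: "a \<noteq> 0"
  define c where "c = \<bar>b\<bar> + 1"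
  have c: "c > 0" unfolding c_def by simp
  have "a * (a / (2 * c)) + b * (a / (2 * c))\<^sup>2 = a\<^sup>2 * (2 * c + b) / (4 * c\<^sup>2)"
    using c by (simp add: field_simps power2_eq_square)
  also have "\<dots> > 0"
    using a c unfolding c_def by (intro divide_pos_pos mult_pos_pos) auto
  finally show False using assms[of "a / (2 * c)"] by simp
qed

lemma kernel_form_decompose:
  assumes "\<And>x y. x \<in> S \<Longrightarrow> y \<in> S \<Longrightarrow> \<mu> x * P x y = (\<Sum>c\<in>C. w c * u c x * u c y)"
  shows "kernel_form S \<mu> P f g = (\<Sum>c\<in>C. w c * (\<Sum>x\<in>S. u c x * f x) * (\<Sum>y\<in>S. u c y * g y))"
proof -
  have "kernel_form S \<mu> P f g = (\<Sum>x\<in>S. \<Sum>y\<in>S. \<Sum>c\<in>C. w c * (u c x * f x) * (u c y * g y))"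
    unfolding kernel_form_def
  proof (intro sum.cong refl)
    fix x y assume "x \<in> S" "y \<in> S"
    have "\<mu> x * f x * P x y * g y = (\<mu> x * P x y) * (f x * g y)" by (simp add: ac_simps)
    also have "\<dots> = (\<Sum>c\<in>C. w c * u c x * u c y) * (f x * g y)" by (simp only: assms[OF \<open>x \<in> S\<close> \<open>y \<in> S\<close>])
    also have "\<dots> = (\<Sum>c\<in>C. w c * (u c x * f x) * (u c y * g y))"
      by (simp add: sum_distrib_left sum_distrib_right ac_simps)
    finally show "\<mu> x * f x * P x y * g y = (\<Sum>c\<in>C. w c * (u c x * f x) * (u c y * g y))" .
  qed
  also have "\<dots> = (\<Sum>c\<in>C. \<Sum>x\<in>S. \<Sum>y\<in>S. w c * (u c x * f x) * (u c y * g y))"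
    by (simp add: sum.swap[of _ C])
  also have "\<dots> = (\<Sum>c\<in>C. w c * (\<Sum>x\<in>S. u c x * f x) * (\<Sum>y\<in>S. u c y * g y))"
    by (simp only: mult.assoc sum_product) (simp add: sum_distrib_left mult.assoc)
  finally show ?thesis .
qed

lemma kernel_form_sum_kernels:
  "kernel_form S \<mu> (\<lambda>x y. c * (\<Sum>i\<in>I. Q i x y)) f g = c * (\<Sum>i\<in>I. kernel_form S \<mu> (Q i) f g)"
  unfolding kernel_form_def
  by (simp add: sum_distrib_left sum_distrib_right sum.swap[of _ I] algebra_simps)

text \<open>Only the bilinear form of \<open>P\<close> on \<open>\<ell>\<^sup>2(\<mu>)\<close> enters: reversibility and \<open>P 1 = 1\<close> are encoded
  in \<open>form_sym\<close> and \<open>form_one\<close>, ergodicity as positivity of the Dirichlet form on centred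
  functions.\<close>

locale ergodic_psd_kernel =
  fixes S :: "'s set" and \<mu> :: "'s \<Rightarrow> real" and P :: "'s \<Rightarrow> 's \<Rightarrow> real"
  assumes finite_S: "finite S"
    and weight_pos: "\<And>x. x \<in> S \<Longrightarrow> 0 < \<mu> x"
    and form_sym: "\<And>f g. kernel_form S \<mu> P f g = kernel_form S \<mu> P g f"
    and form_one: "\<And>f. kernel_form S \<mu> P f (\<lambda>_. 1) = weighted_inner S \<mu> (\<lambda>_. 1) f"
    and form_nonneg: "\<And>f. 0 \<le> kernel_form S \<mu> P f f"
    and dirichlet_pos: "\<And>f. weighted_inner S \<mu> (\<lambda>_. 1) f = 0 \<Longrightarrow> \<exists>x\<in>S. f x \<noteq> 0 \<Longrightarrow>
      0 < dirichlet_form S \<mu> P f"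
    and two_states: "\<exists>x\<in>S. \<exists>y\<in>S. x \<noteq> y"
begin

abbreviation dot where "dot \<equiv> weighted_inner S \<mu>"
abbreviation form where "form \<equiv> kernel_form S \<mu> P"
abbreviation centred where "centred f \<equiv> weighted_inner S \<mu> (\<lambda>_. 1) f = 0"

lemma dot_self_pos: "\<exists>x\<in>S. f x \<noteq> 0 \<Longrightarrow> 0 < dot f f"
  using weighted_inner_self_pos[OF finite_S weight_pos] .

lemma exists_centred_nonzero: "\<exists>f. centred f \<and> (\<exists>x\<in>S. f x \<noteq> 0)"
proof -
  obtain x y where xy: "x \<in> S" "y \<in> S" "x \<noteq> y" using two_states by blast
  define f where "f z = (if z = x then \<mu> y else if z = y then - \<mu> x else 0)" for z
  have "dot (\<lambda>_. 1) f = (\<Sum>z\<in>{x, y}. \<mu> z * 1 * f z)"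
    unfolding weighted_inner_def using finite_S xy by (intro sum.mono_neutral_right) (auto simp: f_def)
  also have "\<dots> = 0" using xy unfolding f_def by simp
  finally show ?thesis using xy weight_pos[of y] unfolding f_def by fastforce
qed

lemma normalise:
  assumes "\<exists>x\<in>S. f x \<noteq> 0"
  defines "f' \<equiv> \<lambda>x. if x \<in> S then f x / sqrt (dot f f) else 0"
  shows "dot f' f' = 1" and "dot (\<lambda>_. 1) f' = dot (\<lambda>_. 1) f / sqrt (dot f f)"
    and "form f' f' = form f f / dot f f" and "\<And>x. x \<notin> S \<Longrightarrow> f' x = 0"
proof -
  define c where "c = 1 / sqrt (dot f f)"
  have s: "0 < dot f f" using dot_self_pos[OF assms(1)] .
  have cc: "c * c = 1 / dot f f" unfolding c_def using s by (simp add: real_sqrt_mult[symmetric])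
  have f': "\<And>x. x \<in> S \<Longrightarrow> f' x = c * f x" unfolding f'_def c_def by simp
  have "dot f' f' = dot (\<lambda>x. c * f x) (\<lambda>x. c * f x)" by (rule weighted_inner_cong) (simp_all add: f')
  hence "dot f' f' = c * c * dot f f" by (simp add: weighted_inner_scale_left weighted_inner_scale_right)
  thus "dot f' f' = 1" using cc s by simp
  have "dot (\<lambda>_. 1) f' = dot (\<lambda>_. 1) (\<lambda>x. c * f x)" by (rule weighted_inner_cong) (simp_all add: f')
  hence "dot (\<lambda>_. 1) f' = c * dot (\<lambda>_. 1) f" by (simp add: weighted_inner_scale_right)
  thus "dot (\<lambda>_. 1) f' = dot (\<lambda>_. 1) f / sqrt (dot f f)" unfolding c_def by simp
  have "form f' f' = form (\<lambda>x. c * f x) (\<lambda>x. c * f x)" by (rule kernel_form_cong) (simp_all add: f')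
  hence "form f' f' = c * c * form f f" by (simp add: kernel_form_scale_left kernel_form_scale_right)
  thus "form f' f' = form f f / dot f f" using cc by simp
  show "\<And>x. x \<notin> S \<Longrightarrow> f' x = 0" unfolding f'_def by simp
qed

lemma compact_centred_unit_sphere:
  "compact {f. (\<forall>x. x \<notin> S \<longrightarrow> f x = 0) \<and> centred f \<and> dot f f = 1}" (is "compact ?K")
proof -
  define T where "T x = (if x \<in> S then cball 0 (sqrt (1 / \<mu> x)) else {0 :: real})" for x
  have "compactin (product_topology (\<lambda>_. euclidean) UNIV) (PiE UNIV T)"
    by (subst compactin_PiE) (auto simp: T_def)
  hence "compact (PiE UNIV T)" by (metis euclidean_product_topology compactin_euclidean_iff)
  moreover have "closed {f. centred f \<and> dot f f = 1}"
    unfolding weighted_inner_def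
    by (intro closed_Collect_conj closed_Collect_eq continuous_intros continuous_on_product_coordinates)
  ultimately have "compact (PiE UNIV T \<inter> {f. centred f \<and> dot f f = 1})"
    by (rule compact_Int_closed)
  moreover have "?K = PiE UNIV T \<inter> {f. centred f \<and> dot f f = 1}"
  proof (intro equalityI subsetI)
    fix f assume f: "f \<in> ?K"
    have "f x \<in> T x" for x
    proof (cases "x \<in> S")
      case True
      have "\<mu> x * f x * f x \<le> dot f f" unfolding weighted_inner_def
        by (rule member_le_sum[OF True _ finite_S]) (auto simp: mult.assoc less_imp_le weight_pos)
      hence "\<bar>f x\<bar>\<^sup>2 \<le> 1 / \<mu> x" using f weight_pos[OF True] by (simp add: field_simps power2_eq_square)
      thus ?thesis using True real_le_rsqrt unfolding T_def by (simp add: dist_real_def)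
    qed (use f T_def in auto)
    thus "f \<in> PiE UNIV T \<inter> {f. centred f \<and> dot f f = 1}" using f by (simp add: PiE_iff)
  qed (auto simp: T_def PiE_iff split: if_splits)
  ultimately show ?thesis by simp
qed

lemma exists_rayleigh_maximiser:
  obtains g where "centred g" "dot g g = 1" "\<And>f. centred f \<Longrightarrow> form f f \<le> form g g * dot f f"
proof -
  define K where "K = {f. (\<forall>x. x \<notin> S \<longrightarrow> f x = 0) \<and> centred f \<and> dot f f = 1}"
  have normalise_in_K: "(\<lambda>x. if x \<in> S then f x / sqrt (dot f f) else 0) \<in> K"
    if "centred f" "\<exists>x\<in>S. f x \<noteq> 0" for f
    using normalise[OF that(2)] that(1) unfolding K_def by simp
  have "K \<noteq> {}" using exists_centred_nonzero normalise_in_K by blast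
  moreover have "continuous_on K (\<lambda>f. form f f)"
    unfolding kernel_form_def
    by (intro continuous_intros continuous_on_subset[OF continuous_on_product_coordinates] subset_UNIV)
  ultimately obtain g where g: "g \<in> K" and gmax: "\<And>f. f \<in> K \<Longrightarrow> form f f \<le> form g g"
    using continuous_attains_sup[OF compact_centred_unit_sphere[folded K_def]] by blast
  have "form f f \<le> form g g * dot f f" if "centred f" for f
  proof (cases "\<exists>x\<in>S. f x \<noteq> 0")
    case True
    have "form f f / dot f f \<le> form g g"
      using gmax[OF normalise_in_K[OF that True]] normalise(3)[OF True] by simp
    thus ?thesis using dot_self_pos[OF True] by (simp add: divide_le_eq mult.commute)
  next
    case False
    hence "form f f = 0" "dot f f = 0" unfolding kernel_form_def weighted_inner_def by auto
    thus ?thesis by simp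
  qed
  with g that show ?thesis unfolding K_def by blast
qed

lemma rayleigh_maximiser_stationary:
  assumes g: "centred g" "dot g g = 1" and max: "\<And>f. centred f \<Longrightarrow> form f f \<le> form g g * dot f f"
    and h: "centred h"
  shows "form g h = form g g * dot g h"
proof -
  let ?\<rho> = "form g g"
  have "2 * (form g h - ?\<rho> * dot g h) * t + (form h h - ?\<rho> * dot h h) * t\<^sup>2 \<le> 0" for t
  proof -
    have "centred (\<lambda>x. g x + t * h x)"
      using g h by (simp add: weighted_inner_add_right weighted_inner_scale_right)
    hence "form (\<lambda>x. g x + t * h x) (\<lambda>x. g x + t * h x) \<le> ?\<rho> * dot (\<lambda>x. g x + t * h x) (\<lambda>x. g x + t * h x)"
      by (rule max)
    thus ?thesis
      using g form_sym[of h g] weighted_inner_commute[of S \<mu> h g]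
      by (simp add: kernel_form_add_left kernel_form_add_right kernel_form_scale_left
          kernel_form_scale_right weighted_inner_add_left weighted_inner_add_right
          weighted_inner_scale_left weighted_inner_scale_right power2_eq_square algebra_simps)
  qed
  hence "2 * (form g h - ?\<rho> * dot g h) = 0" by (rule linear_coeff_zero_if_quadratic_nonpos)
  thus ?thesis by simp
qed

text \<open>The residual \<open>P g - \<rho> g\<close> is centred and, by stationarity, orthogonal to itself.\<close>

lemma rayleigh_maximiser_eigenfunction:
  assumes g: "centred g" "dot g g = 1" and max: "\<And>f. centred f \<Longrightarrow> form f f \<le> form g g * dot f f"
  shows "\<And>x. x \<in> S \<Longrightarrow> (\<Sum>y\<in>S. P x y * g y) = form g g * g x"
proof -
  let ?\<rho> = "form g g"
  define r where "r x = (\<Sum>y\<in>S. P x y * g y) - ?\<rho> * g x" for x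
  have dot_r: "dot h r = form g h - ?\<rho> * dot g h" for h
  proof -
    have "dot h r = dot h (\<lambda>x. \<Sum>y\<in>S. P x y * g y) - ?\<rho> * dot h g"
      unfolding r_def weighted_inner_def by (simp add: algebra_simps sum_subtractf sum_distrib_left)
    thus ?thesis
      using form_sym[of h g] weighted_inner_commute[of S \<mu> h g]
      by (simp add: kernel_form_eq_weighted_inner)
  qed
  have "centred r"
    using dot_r[of "\<lambda>_. 1"] form_sym form_one g(1) weighted_inner_commute[of S \<mu> g] by simp
  hence "dot r r = 0"
    using dot_r[of r] rayleigh_maximiser_stationary[OF g max] by simp
  hence "\<forall>x\<in>S. r x = 0" using dot_self_pos by force
  thus "\<And>x. x \<in> S \<Longrightarrow> (\<Sum>y\<in>S. P x y * g y) = ?\<rho> * g x" unfolding r_def by simp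
qed

text \<open>Self-adjointness: if \<open>u + i v\<close> is an eigenfunction for \<open>a + i b\<close>, then
  \<open>b (\<langle>u,u\<rangle> + \<langle>v,v\<rangle>) = \<langle>u,Pv\<rangle> - \<langle>v,Pu\<rangle> = 0\<close>.\<close>

lemma eigenvalue_real:
  assumes "is_eigenvalue S P \<xi>"
  obtains w where "\<exists>x\<in>S. w x \<noteq> 0" "\<And>x. x \<in> S \<Longrightarrow> (\<Sum>y\<in>S. P x y * w y) = Re \<xi> * w x"
    "\<xi> = complex_of_real (Re \<xi>)"
proof -
  obtain f where fnz: "\<exists>x\<in>S. f x \<noteq> 0"
    and fe: "\<And>x. x \<in> S \<Longrightarrow> (\<Sum>y\<in>S. complex_of_real (P x y) * f y) = \<xi> * f x"
    using assms unfolding is_eigenvalue_def by blast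
  define u where "u x = Re (f x)" for x
  define v where "v x = Im (f x)" for x
  define a where "a = Re \<xi>"
  define b where "b = Im \<xi>"
  have Pu: "(\<Sum>y\<in>S. P x y * u y) = a * u x - b * v x" if "x \<in> S" for x
    using arg_cong[OF fe[OF that], of Re] unfolding u_def v_def a_def b_def by (simp add: Re_sum)
  have Pv: "(\<Sum>y\<in>S. P x y * v y) = b * u x + a * v x" if "x \<in> S" for x
    using arg_cong[OF fe[OF that], of Im] unfolding u_def v_def a_def b_def
    by (simp add: Im_sum algebra_simps)
  have "form u v = dot u (\<lambda>x. b * u x + a * v x)"
    unfolding kernel_form_eq_weighted_inner by (rule weighted_inner_cong) (simp_all add: Pv)
  hence "form u v = b * dot u u + a * dot u v"
    by (simp add: weighted_inner_add_right weighted_inner_scale_right)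
  moreover have "form v u = dot v (\<lambda>x. a * u x - b * v x)"
    unfolding kernel_form_eq_weighted_inner by (rule weighted_inner_cong) (simp_all add: Pu)
  hence "form v u = a * dot v u - b * dot v v"
    by (simp add: weighted_inner_diff_right weighted_inner_scale_right)
  ultimately have "b * (dot u u + dot v v) = 0"
    using form_sym[of u v] weighted_inner_commute[of S \<mu> u v] by (simp add: algebra_simps)
  moreover obtain x where x: "x \<in> S" "u x \<noteq> 0 \<or> v x \<noteq> 0"
    using fnz unfolding u_def v_def by (metis complex_eqI zero_complex.simps)
  hence "dot u u + dot v v > 0"
    using dot_self_pos[of u] dot_self_pos[of v] weighted_inner_self_nonneg[of S \<mu>] weight_pos
    by (metis add_pos_nonneg add_nonneg_pos less_imp_le)
  ultimately have b: "b = 0" by simp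
  define w where "w = (if \<exists>x\<in>S. u x \<noteq> 0 then u else v)"
  show ?thesis
  proof
    show "\<exists>x\<in>S. w x \<noteq> 0" using x unfolding w_def by auto
    show "\<And>x. x \<in> S \<Longrightarrow> (\<Sum>y\<in>S. P x y * w y) = Re \<xi> * w x"
      unfolding w_def using Pu Pv b a_def by auto
    show "\<xi> = complex_of_real (Re \<xi>)" using b unfolding b_def by (simp add: complex_eq_iff)
  qed
qed

lemma eigenfunction_centred_and_nonneg:
  assumes "\<And>x. x \<in> S \<Longrightarrow> (\<Sum>y\<in>S. P x y * w y) = a * w x" and "a \<noteq> 1" and "\<exists>x\<in>S. w x \<noteq> 0"
  shows "centred w" and "form w w = a * dot w w" and "0 \<le> a"
proof -
  have Pw: "form h w = a * dot h w" for h
  proof -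
    have "form h w = dot h (\<lambda>x. a * w x)"
      unfolding kernel_form_eq_weighted_inner by (rule weighted_inner_cong) (simp_all add: assms(1))
    thus ?thesis by (simp add: weighted_inner_scale_right)
  qed
  have "a * dot (\<lambda>_. 1) w = dot (\<lambda>_. 1) w"
    using Pw[of "\<lambda>_. 1"] form_sym form_one[of w] by simp
  thus "centred w" using assms(2) by (metis mult_cancel_right2)
  show "form w w = a * dot w w" by (rule Pw)
  thus "0 \<le> a" using form_nonneg[of w] dot_self_pos[OF assms(3)] by (simp add: zero_le_mult_iff)
qed

text \<open>Every eigenvalue \<open>\<noteq> 1\<close> is real with a centred eigenfunction, so by positive
  semidefiniteness its modulus is a Rayleigh quotient on centred functions; the maximal quotient
  is itself an eigenvalue.\<close>

lemma spectral_gap_rayleigh: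
  assumes g: "centred g" "dot g g = 1" and max: "\<And>f. centred f \<Longrightarrow> form f f \<le> form g g * dot f f"
  shows "spectral_gap S P = 1 - form g g"
proof -
  let ?\<rho> = "form g g"
  define EV where "EV = {cmod \<xi> | \<xi>. is_eigenvalue S P \<xi> \<and> \<xi> \<noteq> 1}"
  have gnz: "\<exists>x\<in>S. g x \<noteq> 0" using g(2) weighted_inner_self_nonzero[of S \<mu> g] by simp
  have "?\<rho> < 1" using dirichlet_pos[OF g(1) gnz] g(2) unfolding dirichlet_form_def by simp
  have "finite EV"
    unfolding EV_def using finite_eigenvalues[OF finite_S, of P] by (simp add: Setcompr_eq_image)
  moreover have "?\<rho> \<in> EV"
  proof -
    have "(\<Sum>y\<in>S. complex_of_real (P x y) * complex_of_real (g y)) = complex_of_real ?\<rho> * g x"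
      if "x \<in> S" for x
      using rayleigh_maximiser_eigenfunction[OF g max that] by (simp flip: of_real_mult of_real_sum)
    hence "is_eigenvalue S P (complex_of_real ?\<rho>)"
      unfolding is_eigenvalue_def using gnz by (intro exI[of _ "\<lambda>x. complex_of_real (g x)"]) simp
    moreover have "complex_of_real ?\<rho> \<noteq> 1" using \<open>?\<rho> < 1\<close> by simp
    moreover have "?\<rho> = cmod (complex_of_real ?\<rho>)" using form_nonneg[of g] by simp
    ultimately show ?thesis unfolding EV_def by blast
  qed
  moreover have "y \<le> ?\<rho>" if "y \<in> EV" for y
  proof -
    from \<open>y \<in> EV\<close> obtain \<xi> where y: "y = cmod \<xi>" and ev: "is_eigenvalue S P \<xi>" and "\<xi> \<noteq> 1"
      unfolding EV_def by blast
    obtain w where w: "\<exists>x\<in>S. w x \<noteq> 0" "\<And>x. x \<in> S \<Longrightarrow> (\<Sum>y\<in>S. P x y * w y) = Re \<xi> * w x"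
      and \<xi>: "\<xi> = complex_of_real (Re \<xi>)"
      using eigenvalue_real[OF ev] by blast
    have "Re \<xi> \<noteq> 1" using \<open>\<xi> \<noteq> 1\<close> \<xi> by (metis of_real_1)
    note w_props = eigenfunction_centred_and_nonneg[OF w(2) this w(1)]
    have "Re \<xi> * dot w w \<le> ?\<rho> * dot w w" using max[OF w_props(1)] w_props(2) by simp
    hence "Re \<xi> \<le> ?\<rho>" using dot_self_pos[OF w(1)] by simp
    moreover have "cmod \<xi> = Re \<xi>" using w_props(3) by (subst \<xi>) simp
    ultimately show ?thesis using y by simp
  qed
  ultimately have "Max EV = ?\<rho>" by (intro Max_eqI) auto
  thus ?thesis unfolding spectral_gap_def EV_def by simp
qed

lemma spectral_gap_le_dirichlet:
  assumes "centred f"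
  shows "spectral_gap S P * dot f f \<le> dirichlet_form S \<mu> P f"
proof -
  obtain g where g: "centred g" "dot g g = 1" and max: "\<And>f. centred f \<Longrightarrow> form f f \<le> form g g * dot f f"
    using exists_rayleigh_maximiser by blast
  have gap: "spectral_gap S P = 1 - form g g" by (rule spectral_gap_rayleigh[OF g max])
  show ?thesis
    using max[OF assms] unfolding gap dirichlet_form_def by (simp add: algebra_simps)
qed

lemma spectral_gap_attained:
  obtains g where "centred g" "\<exists>x\<in>S. g x \<noteq> 0" "dirichlet_form S \<mu> P g = spectral_gap S P * dot g g"
proof -
  obtain g where g: "centred g" "dot g g = 1" and max: "\<And>f. centred f \<Longrightarrow> form f f \<le> form g g * dot f f"
    using exists_rayleigh_maximiser by blast
  have gap: "spectral_gap S P = 1 - form g g" by (rule spectral_gap_rayleigh[OF g max])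
  show ?thesis
  proof (rule that[OF g(1)])
    show "\<exists>x\<in>S. g x \<noteq> 0" using g(2) weighted_inner_self_nonzero[of S \<mu> g] by simp
    show "dirichlet_form S \<mu> P g = spectral_gap S P * dot g g"
      using g(2) unfolding gap dirichlet_form_def by simp
  qed
qed

lemma spectral_gap_pos: "0 < spectral_gap S P"
proof -
  obtain g where g: "centred g" "\<exists>x\<in>S. g x \<noteq> 0" "dirichlet_form S \<mu> P g = spectral_gap S P * dot g g"
    using spectral_gap_attained by blast
  show ?thesis using dirichlet_pos[OF g(1,2)] dot_self_pos[OF g(2)] g(3) by (simp add: zero_less_mult_iff)
qed

end

lemma spectral_gap_comparison:
  assumes "ergodic_psd_kernel S \<mu> P" and "ergodic_psd_kernel S \<mu> Q"
    and "\<And>f. dirichlet_form S \<mu> P f \<le> c * dirichlet_form S \<mu> Q f"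
  shows "spectral_gap S P \<le> c * spectral_gap S Q"
proof -
  interpret P: ergodic_psd_kernel S \<mu> P by fact
  interpret Q: ergodic_psd_kernel S \<mu> Q by fact
  obtain g where g: "Q.centred g" "\<exists>x\<in>S. g x \<noteq> 0"
    and gap: "dirichlet_form S \<mu> Q g = spectral_gap S Q * P.dot g g"
    using Q.spectral_gap_attained by blast
  have "spectral_gap S P * P.dot g g \<le> (c * spectral_gap S Q) * P.dot g g"
    using P.spectral_gap_le_dirichlet[OF g(1)] assms(3)[of g] gap by simp
  thus ?thesis using P.dot_self_pos[OF g(2)] by simp
qed

section \<open>Product Bernoulli measures and the Efron--Stein inequality\<close>

definition bernoulli_weight :: "real \<Rightarrow> 'a set \<Rightarrow> 'a set \<Rightarrow> real"
  where "bernoulli_weight p F A = p ^ card A * (1 - p) ^ (card F - card A)"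

definition bernoulli_expect :: "real \<Rightarrow> 'a set \<Rightarrow> ('a set \<Rightarrow> real) \<Rightarrow> real"
  where "bernoulli_expect p F f = (\<Sum>A\<in>Pow F. bernoulli_weight p F A * f A)"

definition bernoulli_var :: "real \<Rightarrow> 'a set \<Rightarrow> ('a set \<Rightarrow> real) \<Rightarrow> real"
  where "bernoulli_var p F f = bernoulli_expect p F (\<lambda>A. (f A)\<^sup>2) - (bernoulli_expect p F f)\<^sup>2"

text \<open>Heat-bath update of coordinate \<open>e\<close>: the conditional expectation of \<open>f\<close> given the other
  coordinates.\<close>

definition resample :: "real \<Rightarrow> 'a \<Rightarrow> ('a set \<Rightarrow> real) \<Rightarrow> 'a set \<Rightarrow> real"
  where "resample p e f A = p * f (insert e A) + (1 - p) * f (A - {e})"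

text \<open>As \<open>resample p e\<close> is a self-adjoint projection, \<open>local_var\<close> is the expected conditional variance
  of \<open>f\<close> in coordinate \<open>e\<close>.\<close>

definition local_var :: "real \<Rightarrow> 'a set \<Rightarrow> 'a \<Rightarrow> ('a set \<Rightarrow> real) \<Rightarrow> real"
  where "local_var p F e f =
    bernoulli_expect p F (\<lambda>A. (f A)\<^sup>2) - bernoulli_expect p F (\<lambda>A. f A * resample p e f A)"

lemma bernoulli_weight_pos: "0 < p \<Longrightarrow> p < 1 \<Longrightarrow> 0 < bernoulli_weight p F A"
  unfolding bernoulli_weight_def by simp

lemma bernoulli_weight_eq_odds:
  assumes "B \<subseteq> F" and "finite F" and "p \<noteq> 1"
  shows "bernoulli_weight p F B = (p / (1 - p)) ^ card B * (1 - p) ^ card F"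
proof -
  have "card B \<le> card F" using card_mono[OF assms(2,1)] .
  hence "(1 - p) ^ card F = (1 - p) ^ card B * (1 - p) ^ (card F - card B)"
    by (simp flip: power_add)
  moreover have "(p / (1 - p)) ^ card B * (1 - p) ^ card B = p ^ card B"
    using assms(3) by (simp add: power_divide)
  ultimately show ?thesis unfolding bernoulli_weight_def by (metis mult.assoc)
qed

lemma bernoulli_expect_empty [simp]: "bernoulli_expect p {} f = f {}"
  unfolding bernoulli_expect_def bernoulli_weight_def by simp

lemma bernoulli_expect_insert:
  assumes fin: "finite F" and a: "a \<notin> F"
  shows "bernoulli_expect p (insert a F) f =
    p * bernoulli_expect p F (\<lambda>A. f (insert a A)) + (1 - p) * bernoulli_expect p F f"
proof -
  have inj: "inj_on (insert a) (Pow F)"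
    using a unfolding inj_on_def by (metis PowD insert_ident subset_iff)
  have "bernoulli_expect p (insert a F) f
      = (\<Sum>A\<in>Pow F. bernoulli_weight p (insert a F) A * f A)
      + (\<Sum>A\<in>insert a ` Pow F. bernoulli_weight p (insert a F) A * f A)"
    unfolding bernoulli_expect_def Pow_insert using fin a by (intro sum.union_disjoint) auto
  also have "(\<Sum>A\<in>insert a ` Pow F. bernoulli_weight p (insert a F) A * f A)
      = (\<Sum>A\<in>Pow F. bernoulli_weight p (insert a F) (insert a A) * f (insert a A))"
    by (rule sum.reindex[OF inj, unfolded comp_def])
  also have "\<dots> = (\<Sum>A\<in>Pow F. p * (bernoulli_weight p F A * f (insert a A)))"
  proof (intro sum.cong refl)
    fix A assume "A \<in> Pow F"
    hence "finite A" "a \<notin> A" "card A \<le> card F"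
      using fin a finite_subset card_mono by auto
    thus "bernoulli_weight p (insert a F) (insert a A) * f (insert a A)
        = p * (bernoulli_weight p F A * f (insert a A))"
      unfolding bernoulli_weight_def using fin a by simp
  qed
  also have "(\<Sum>A\<in>Pow F. bernoulli_weight p (insert a F) A * f A)
      = (\<Sum>A\<in>Pow F. (1 - p) * (bernoulli_weight p F A * f A))"
  proof (intro sum.cong refl)
    fix A assume "A \<in> Pow F"
    hence "card (insert a F) - card A = Suc (card F - card A)"
      using fin a card_mono[OF fin] by (simp add: Suc_diff_le)
    thus "bernoulli_weight p (insert a F) A * f A = (1 - p) * (bernoulli_weight p F A * f A)"
      unfolding bernoulli_weight_def by simp
  qed
  finally show ?thesis unfolding bernoulli_expect_def by (simp add: sum_distrib_left)
qed

lemma bernoulli_expect_cong: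
  "(\<And>A. A \<subseteq> F \<Longrightarrow> f A = g A) \<Longrightarrow> bernoulli_expect p F f = bernoulli_expect p F g"
  unfolding bernoulli_expect_def by (intro sum.cong) auto

lemma bernoulli_expect_add:
  "bernoulli_expect p F (\<lambda>A. f A + g A) = bernoulli_expect p F f + bernoulli_expect p F g"
  unfolding bernoulli_expect_def by (simp add: algebra_simps sum.distrib)

lemma bernoulli_expect_diff:
  "bernoulli_expect p F (\<lambda>A. f A - g A) = bernoulli_expect p F f - bernoulli_expect p F g"
  unfolding bernoulli_expect_def by (simp add: algebra_simps sum_subtractf)

lemma bernoulli_expect_scale:
  "bernoulli_expect p F (\<lambda>A. c * f A) = c * bernoulli_expect p F f"
  unfolding bernoulli_expect_def by (simp add: algebra_simps sum_distrib_left)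

lemma bernoulli_expect_const: "finite F \<Longrightarrow> bernoulli_expect p F (\<lambda>_. c) = c"
proof (induction F rule: finite_induct)
  case (insert a F) thus ?case by (simp add: bernoulli_expect_insert algebra_simps)
qed simp

lemma bernoulli_expect_nonneg:
  "0 \<le> p \<Longrightarrow> p \<le> 1 \<Longrightarrow> (\<And>A. A \<subseteq> F \<Longrightarrow> 0 \<le> f A) \<Longrightarrow> 0 \<le> bernoulli_expect p F f"
  unfolding bernoulli_expect_def bernoulli_weight_def by (intro sum_nonneg mult_nonneg_nonneg) auto

lemma bernoulli_expect_eq_sum_Pow:
  assumes "finite E" and "F \<subseteq> E"
  shows "(\<Sum>A\<in>Pow E. if A \<subseteq> F then bernoulli_weight p F A * f A else 0) = bernoulli_expect p F f"
proof -
  have "{A \<in> Pow E. A \<subseteq> F} = Pow F" using assms(2) by auto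
  thus ?thesis
    unfolding bernoulli_expect_def sum.inter_filter[OF finite_Pow_iff[THEN iffD2, OF assms(1)], symmetric]
    by simp
qed

lemma bernoulli_var_eq_expect_sq_dev:
  assumes "finite F"
  shows "bernoulli_var p F f = bernoulli_expect p F (\<lambda>A. (f A - bernoulli_expect p F f)\<^sup>2)"
proof -
  define c where "c = bernoulli_expect p F f"
  have "bernoulli_expect p F (\<lambda>A. (f A - c)\<^sup>2)
      = bernoulli_expect p F (\<lambda>A. (f A)\<^sup>2 + (-2 * c) * f A + c\<^sup>2)"
    by (rule bernoulli_expect_cong) (simp add: power2_eq_square algebra_simps)
  also have "\<dots> = bernoulli_var p F f"
    unfolding bernoulli_var_def bernoulli_expect_add bernoulli_expect_scale
      bernoulli_expect_const[OF assms] c_def[symmetric]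
    by (simp add: power2_eq_square)
  finally show ?thesis unfolding c_def by simp
qed

lemma bernoulli_var_nonneg: "finite F \<Longrightarrow> 0 \<le> p \<Longrightarrow> p \<le> 1 \<Longrightarrow> 0 \<le> bernoulli_var p F f"
  by (simp add: bernoulli_var_eq_expect_sq_dev bernoulli_expect_nonneg)

lemma bernoulli_var_eq_0_imp_const:
  assumes "finite F" "0 < p" "p < 1" "bernoulli_var p F f = 0" "A \<subseteq> F"
  shows "f A = bernoulli_expect p F f"
proof -
  define c where "c = bernoulli_expect p F f"
  have "(\<Sum>B\<in>Pow F. bernoulli_weight p F B * (f B - c)\<^sup>2) = 0"
    using assms(4) unfolding bernoulli_var_eq_expect_sq_dev[OF assms(1)] bernoulli_expect_def c_def .
  moreover have "\<And>B. 0 \<le> bernoulli_weight p F B * (f B - c)\<^sup>2"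
    by (intro mult_nonneg_nonneg less_imp_le[OF bernoulli_weight_pos[OF assms(2,3)]]) simp
  ultimately have "bernoulli_weight p F A * (f A - c)\<^sup>2 = 0"
    using assms(1,5) by (simp add: sum_nonneg_eq_0_iff)
  thus ?thesis using bernoulli_weight_pos[OF assms(2,3), of F A] unfolding c_def by simp
qed

lemma bernoulli_expect_remove:
  assumes "finite F" and "e \<in> F"
  shows "bernoulli_expect p F g =
    bernoulli_expect p (F - {e}) (\<lambda>A. p * g (insert e A) + (1 - p) * g A)"
proof -
  have "bernoulli_expect p F g = bernoulli_expect p (insert e (F - {e})) g"
    using assms(2) by (simp add: insert_absorb)
  also have "\<dots> = p * bernoulli_expect p (F - {e}) (\<lambda>A. g (insert e A))
      + (1 - p) * bernoulli_expect p (F - {e}) g"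
    using assms(1) by (intro bernoulli_expect_insert) auto
  finally show ?thesis by (simp only: bernoulli_expect_add bernoulli_expect_scale)
qed

text \<open>Conditioning on the other coordinates, \<open>E [g \<cdot> T\<^sub>e h] = E [T\<^sub>e g \<cdot> T\<^sub>e h]\<close>: the update
  \<open>T\<^sub>e\<close> is a self-adjoint projection.\<close>

lemma bernoulli_expect_mult_resample:
  assumes "finite F" and "e \<in> F"
  shows "bernoulli_expect p F (\<lambda>A. g A * resample p e h A) = bernoulli_expect p (F - {e})
    (\<lambda>A. (p * g (insert e A) + (1 - p) * g A) * (p * h (insert e A) + (1 - p) * h A))"
  unfolding bernoulli_expect_remove[OF assms]
proof (rule bernoulli_expect_cong)
  fix A assume "A \<subseteq> F - {e}"
  hence "insert e A - {e} = A" "A - {e} = A" by auto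
  thus "p * (g (insert e A) * resample p e h (insert e A)) + (1 - p) * (g A * resample p e h A)
      = (p * g (insert e A) + (1 - p) * g A) * (p * h (insert e A) + (1 - p) * h A)"
    by (simp add: resample_def algebra_simps)
qed

lemma bernoulli_expect_resample_commute:
  assumes "finite F" and "e \<in> F"
  shows "bernoulli_expect p F (\<lambda>A. g A * resample p e h A)
    = bernoulli_expect p F (\<lambda>A. h A * resample p e g A)"
  unfolding bernoulli_expect_mult_resample[OF assms] by (simp add: mult.commute)

lemma square_bernoulli_expect_le_resample:
  assumes "finite F" and "e \<in> F" and "0 \<le> p" "p \<le> 1"
  shows "(bernoulli_expect p F f)\<^sup>2 \<le> bernoulli_expect p F (\<lambda>A. f A * resample p e f A)"
proof -
  let ?g = "\<lambda>A. p * f (insert e A) + (1 - p) * f A"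
  have "(bernoulli_expect p F f)\<^sup>2 = (bernoulli_expect p (F - {e}) ?g)\<^sup>2"
    using bernoulli_expect_remove[OF assms(1,2)] by simp
  also have "\<dots> \<le> bernoulli_expect p (F - {e}) (\<lambda>A. (?g A)\<^sup>2)"
    using bernoulli_var_nonneg[of "F - {e}" p ?g] assms unfolding bernoulli_var_def by simp
  also have "\<dots> = bernoulli_expect p F (\<lambda>A. f A * resample p e f A)"
    unfolding bernoulli_expect_mult_resample[OF assms(1,2)] by (simp add: power2_eq_square)
  finally show ?thesis .
qed

lemma bernoulli_var_insert:
  assumes "finite F" and "a \<notin> F"
  shows "bernoulli_var p (insert a F) f
    = p * bernoulli_var p F (\<lambda>A. f (insert a A)) + (1 - p) * bernoulli_var p F f
      + p * (1 - p) * (bernoulli_expect p F (\<lambda>A. f (insert a A)) - bernoulli_expect p F f)\<^sup>2"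
  unfolding bernoulli_var_def bernoulli_expect_insert[OF assms]
  by (simp add: power2_eq_square algebra_simps)

lemma local_var_insert_self:
  assumes "finite F" and "a \<notin> F"
  shows "local_var p (insert a F) a f
    = p * (1 - p) * bernoulli_expect p F (\<lambda>A. (f (insert a A) - f A)\<^sup>2)"
proof -
  have fin: "finite (insert a F)" and F: "insert a F - {a} = F" using assms by auto
  have "bernoulli_expect p (insert a F) (\<lambda>A. (f A)\<^sup>2)
      = bernoulli_expect p F (\<lambda>A. p * (f (insert a A))\<^sup>2 + (1 - p) * (f A)\<^sup>2)"
    using bernoulli_expect_remove[OF fin insertI1, of p "\<lambda>A. (f A)\<^sup>2"] unfolding F .
  moreover have "bernoulli_expect p (insert a F) (\<lambda>A. f A * resample p a f A)
      = bernoulli_expect p F (\<lambda>A. (p * f (insert a A) + (1 - p) * f A) * (p * f (insert a A) + (1 - p) * f A))"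
    using bernoulli_expect_mult_resample[OF fin insertI1, of p f f] unfolding F .
  ultimately have "local_var p (insert a F) a f = bernoulli_expect p F
      (\<lambda>A. (p * (f (insert a A))\<^sup>2 + (1 - p) * (f A)\<^sup>2)
         - (p * f (insert a A) + (1 - p) * f A) * (p * f (insert a A) + (1 - p) * f A))"
    unfolding local_var_def bernoulli_expect_diff by simp
  also have "\<dots> = bernoulli_expect p F (\<lambda>A. p * (1 - p) * (f (insert a A) - f A)\<^sup>2)"
    by (rule bernoulli_expect_cong) (simp add: power2_eq_square algebra_simps)
  finally show ?thesis by (simp only: bernoulli_expect_scale)
qed

lemma local_var_insert_other:
  assumes "finite F" and "a \<notin> F" and "e \<in> F"
  shows "local_var p (insert a F) e f
    = p * local_var p F e (\<lambda>A. f (insert a A)) + (1 - p) * local_var p F e f"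
proof -
  have "insert a A - {e} = insert a (A - {e})" for A using assms by auto
  hence "resample p e f (insert a A) = resample p e (\<lambda>A. f (insert a A)) A" for A
    by (simp add: resample_def insert_commute)
  thus ?thesis
    unfolding local_var_def bernoulli_expect_insert[OF assms(1,2)] by (simp add: algebra_simps)
qed

text \<open>The Efron--Stein inequality for the product Bernoulli measure, by induction on the
  number of coordinates: the variance splits along the new coordinate into the two conditional
  variances plus the variance of the conditional means, and the latter is dominated by the local
  variance of the new coordinate (Jensen).\<close>

theorem efron_stein:
  assumes "finite F" and "0 \<le> p" "p \<le> 1"
  shows "bernoulli_var p F f \<le> (\<Sum>e\<in>F. local_var p F e f)"
  using assms(1)
proof (induction F arbitrary: f rule: finite_induct)
  case empty thus ?case by (simp add: bernoulli_var_def)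
next
  case (insert a F)
  define f1 where "f1 A = f (insert a A)" for A
  have jensen: "(bernoulli_expect p F f1 - bernoulli_expect p F f)\<^sup>2
      \<le> bernoulli_expect p F (\<lambda>A. (f1 A - f A)\<^sup>2)"
    using bernoulli_var_nonneg[OF insert(1) assms(2,3), of "\<lambda>A. f1 A - f A"]
    unfolding bernoulli_var_def bernoulli_expect_diff by simp
  have "(\<Sum>e\<in>insert a F. local_var p (insert a F) e f)
      = p * (1 - p) * bernoulli_expect p F (\<lambda>A. (f1 A - f A)\<^sup>2)
        + p * (\<Sum>e\<in>F. local_var p F e f1) + (1 - p) * (\<Sum>e\<in>F. local_var p F e f)"
    using insert(1,2) unfolding f1_def
    by (simp add: local_var_insert_self local_var_insert_other sum.distrib sum_distrib_left)
  moreover have "p * bernoulli_var p F f1 \<le> p * (\<Sum>e\<in>F. local_var p F e f1)"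
    using insert(3) assms(2) by (intro mult_left_mono) auto
  moreover have "(1 - p) * bernoulli_var p F f \<le> (1 - p) * (\<Sum>e\<in>F. local_var p F e f)"
    using insert(3) assms(3) by (intro mult_left_mono) auto
  moreover have "p * (1 - p) * (bernoulli_expect p F f1 - bernoulli_expect p F f)\<^sup>2
      \<le> p * (1 - p) * bernoulli_expect p F (\<lambda>A. (f1 A - f A)\<^sup>2)"
    using jensen assms(2,3) by (intro mult_left_mono) auto
  ultimately show ?case
    unfolding bernoulli_var_insert[OF insert(1,2)] f1_def by linarith
qed

text \<open>In the Edwards--Sokal coupling an edge that is not monochromatic is closed in every
  compatible configuration, so its heat-bath update is the identity.\<close>

definition resample_within :: "real \<Rightarrow> 'a set \<Rightarrow> 'a \<Rightarrow> ('a set \<Rightarrow> real) \<Rightarrow> 'a set \<Rightarrow> real"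
  where "resample_within p F e f = (if e \<in> F then resample p e f else f)"

lemma resample_within_const [simp]: "resample_within p F e (\<lambda>_. c) A = c"
  unfolding resample_within_def resample_def by (simp add: algebra_simps)

lemma bernoulli_expect_resample_within_commute:
  "finite F \<Longrightarrow> bernoulli_expect p F (\<lambda>A. g A * resample_within p F e h A)
    = bernoulli_expect p F (\<lambda>A. h A * resample_within p F e g A)"
  unfolding resample_within_def
  by (cases "e \<in> F") (simp_all add: bernoulli_expect_resample_commute[of F e p g h] mult.commute)

lemma square_bernoulli_expect_le_resample_within:
  assumes "finite F" and "0 \<le> p" "p \<le> 1"
  shows "(bernoulli_expect p F f)\<^sup>2 \<le> bernoulli_expect p F (\<lambda>A. f A * resample_within p F e f A)"
  using square_bernoulli_expect_le_resample[OF assms(1) _ assms(2,3)]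
    bernoulli_var_nonneg[OF assms] unfolding resample_within_def bernoulli_var_def
  by (auto simp: power2_eq_square)

lemma efron_stein_within:
  assumes "finite E" and "F \<subseteq> E" and "0 \<le> p" "p \<le> 1"
  shows "bernoulli_var p F f \<le> (\<Sum>e\<in>E. bernoulli_expect p F (\<lambda>A. (f A)\<^sup>2)
    - bernoulli_expect p F (\<lambda>A. f A * resample_within p F e f A))"
proof -
  have "(\<Sum>e\<in>E. bernoulli_expect p F (\<lambda>A. (f A)\<^sup>2)
      - bernoulli_expect p F (\<lambda>A. f A * resample_within p F e f A)) = (\<Sum>e\<in>F. local_var p F e f)"
    using assms(1,2)
    by (intro sum.mono_neutral_cong_right)
       (auto simp: local_var_def resample_within_def power2_eq_square)
  thus ?thesis using efron_stein[OF finite_subset[OF assms(2,1)] assms(3,4)] by simp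
qed

section \<open>The Edwards--Sokal coupling\<close>

lemma card_PiE_eq_coordinates:
  assumes "C1 \<in> K" "C2 \<in> K" "C1 \<noteq> C2"
  shows "card (PiE K (\<lambda>_. X)) = card {\<tau> \<in> PiE K (\<lambda>_. X). \<tau> C1 = \<tau> C2} * card X"
proof -
  have "bij_betw (\<lambda>\<tau>. (\<tau>(C2 := \<tau> C1), \<tau> C2)) (PiE K (\<lambda>_. X))
      ({\<tau> \<in> PiE K (\<lambda>_. X). \<tau> C1 = \<tau> C2} \<times> X)"
    by (rule bij_betw_byWitness[where f' = "\<lambda>(\<tau>, k). \<tau>(C2 := k)"])
       (use assms in \<open>auto simp: PiE_iff extensional_def\<close>)
  thus ?thesis by (simp add: bij_betw_same_card card_cartesian_product)
qed

lemma conn_if_mem: "e \<in> A \<Longrightarrow> conn end1 end2 A (end1 e) (end2 e)"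
  unfolding conn_def edge_rel_def by (intro r_into_rtrancl) blast

locale random_cluster =
  fixes V :: "'v set" and E :: "'e set" and end1 end2 :: "'e \<Rightarrow> 'v" and p :: real and q :: nat
  assumes finite_V: "finite V" and finite_E: "finite E"
    and ends_in_V: "\<forall>e \<in> E. end1 e \<in> V \<and> end2 e \<in> V"
    and p_pos: "0 < p" and p_less_1: "p < 1" and q_pos: "q \<ge> 1" and E_nonempty: "E \<noteq> {}"
begin

abbreviation monochromatic where "monochromatic \<sigma> \<equiv> mono_edges E end1 end2 \<sigma>"

definition colourings :: "('v \<Rightarrow> nat) set"
  where "colourings = PiE V (\<lambda>_. {1..q})"

definition compatible :: "'e set \<Rightarrow> ('v \<Rightarrow> nat) set"
  where "compatible A = {\<sigma> \<in> colourings. A \<subseteq> monochromatic \<sigma>}"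

definition comp_rel :: "'e set \<Rightarrow> ('v \<times> 'v) set"
  where "comp_rel A = (edge_rel end1 end2 A)\<^sup>* \<inter> V \<times> V"

definition component_colouring :: "'e set \<Rightarrow> ('v set \<Rightarrow> nat) \<Rightarrow> 'v \<Rightarrow> nat"
  where "component_colouring A \<tau> = (\<lambda>x\<in>V. \<tau> (comp_rel A `` {x}))"

text \<open>Edwards--Sokal weights: the pair \<open>(\<sigma>, A)\<close> gets \<open>colour_weight \<sigma> * bernoulli_weight p (monochromatic \<sigma>) A\<close>,
  i.e. \<open>p^|A| (1-p)^(|E|-|A|)\<close> whenever \<open>A \<subseteq> monochromatic \<sigma>\<close>; its marginal on \<open>A\<close> is \<open>rc_weight\<close>, the
  random-cluster measure up to normalisation.\<close>

definition colour_weight :: "('v \<Rightarrow> nat) \<Rightarrow> real"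
  where "colour_weight \<sigma> = (1 - p) ^ (card E - card (monochromatic \<sigma>))"

definition edge_weight :: "'e set \<Rightarrow> real"
  where "edge_weight A = p ^ card A * (1 - p) ^ (card E - card A)"

definition rc_weight :: "'e set \<Rightarrow> real"
  where "rc_weight A = real (q ^ ncomp V end1 end2 A) * edge_weight A"

lemma finite_colourings: "finite colourings"
  unfolding colourings_def using finite_V by (intro finite_PiE) auto

lemma finite_compatible: "finite (compatible A)"
  unfolding compatible_def using finite_colourings by simp

lemma monochromatic_subset: "monochromatic \<sigma> \<subseteq> E"
  unfolding mono_edges_def by auto

lemma finite_monochromatic: "finite (monochromatic \<sigma>)"
  using finite_subset[OF monochromatic_subset finite_E] .

lemma mem_monochromatic_iff: "e \<in> monochromatic \<sigma> \<longleftrightarrow> e \<in> E \<and> \<sigma> (end1 e) = \<sigma> (end2 e)"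
  unfolding mono_edges_def by auto

lemma colouring_constant_on_components:
  assumes "A \<subseteq> monochromatic \<sigma>" "(x, y) \<in> (edge_rel end1 end2 A)\<^sup>*"
  shows "\<sigma> x = \<sigma> y"
  using assms(2)
proof (induction rule: rtrancl_induct)
  case (step y z)
  then obtain e where "e \<in> A" "(y = end1 e \<and> z = end2 e) \<or> (y = end2 e \<and> z = end1 e)"
    unfolding edge_rel_def by blast
  thus ?case using step(3) assms(1) mem_monochromatic_iff by auto
qed simp

lemma equiv_comp_rel: "equiv V (comp_rel A)"
proof -
  have "sym (edge_rel end1 end2 A)" unfolding edge_rel_def sym_def by blast
  hence "sym ((edge_rel end1 end2 A)\<^sup>*)" by (rule sym_rtrancl)
  thus ?thesis
    unfolding equiv_def comp_rel_def refl_on_def sym_def trans_def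
    by (auto intro: rtrancl_trans)
qed

lemma compatible_iff_constant_on_components:
  assumes "A \<subseteq> E"
  shows "compatible A = {\<sigma> \<in> colourings. \<forall>x y. (x, y) \<in> comp_rel A \<longrightarrow> \<sigma> x = \<sigma> y}"
proof -
  have "A \<subseteq> monochromatic \<sigma>" if "\<forall>x y. (x, y) \<in> comp_rel A \<longrightarrow> \<sigma> x = \<sigma> y" for \<sigma>
  proof
    fix e assume e: "e \<in> A"
    hence "(end1 e, end2 e) \<in> comp_rel A"
      using ends_in_V assms unfolding comp_rel_def edge_rel_def by blast
    thus "e \<in> monochromatic \<sigma>" using that e assms mem_monochromatic_iff by auto
  qed
  thus ?thesis
    unfolding compatible_def comp_rel_def using colouring_constant_on_components by blast
qed

lemma component_representative:
  assumes "C \<in> V // comp_rel A"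
  shows "(SOME x. x \<in> C) \<in> C" and "comp_rel A `` {SOME x. x \<in> C} = C"
proof -
  obtain y where y: "y \<in> V" "C = comp_rel A `` {y}" using assms by (rule quotientE)
  show some: "(SOME x. x \<in> C) \<in> C"
    using y equiv_class_self[OF equiv_comp_rel] by (metis someI_ex)
  hence "(y, SOME x. x \<in> C) \<in> comp_rel A" using y(2) by blast
  thus "comp_rel A `` {SOME x. x \<in> C} = C" using equiv_class_eq[OF equiv_comp_rel] y(2) by metis
qed

lemma bij_component_colouring:
  assumes "A \<subseteq> E"
  shows "bij_betw (component_colouring A) (PiE (V // comp_rel A) (\<lambda>_. {1..q})) (compatible A)"
proof (rule bij_betw_byWitness[where f' = "\<lambda>\<sigma>. \<lambda>C\<in>V // comp_rel A. \<sigma> (SOME x. x \<in> C)"])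
  have some_V: "(SOME x. x \<in> C) \<in> V" if "C \<in> V // comp_rel A" for C
    using component_representative(1)[OF that] that unfolding quotient_def comp_rel_def by auto
  note compat = compatible_iff_constant_on_components[OF assms]
  show "\<forall>\<tau>\<in>PiE (V // comp_rel A) (\<lambda>_. {1..q}).
      (\<lambda>C\<in>V // comp_rel A. component_colouring A \<tau> (SOME x. x \<in> C)) = \<tau>"
    by (auto simp: component_colouring_def some_V component_representative(2) PiE_iff extensional_def)
  show "\<forall>\<sigma>\<in>compatible A. component_colouring A (\<lambda>C\<in>V // comp_rel A. \<sigma> (SOME x. x \<in> C)) = \<sigma>"
  proof (intro ballI ext)
    fix \<sigma> x assume \<sigma>: "\<sigma> \<in> compatible A"
    show "component_colouring A (\<lambda>C\<in>V // comp_rel A. \<sigma> (SOME x. x \<in> C)) x = \<sigma> x"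
    proof (cases "x \<in> V")
      case True
      hence "(x, SOME y. y \<in> comp_rel A `` {x}) \<in> comp_rel A"
        using component_representative(1)[of "comp_rel A `` {x}" A] by (simp add: quotientI)
      thus ?thesis using True \<sigma> unfolding compat component_colouring_def by (auto intro: quotientI)
    qed (use \<sigma> in \<open>auto simp: component_colouring_def compatible_def colourings_def PiE_def extensional_def\<close>)
  qed
  show "component_colouring A ` PiE (V // comp_rel A) (\<lambda>_. {1..q}) \<subseteq> compatible A"
    unfolding compat colourings_def component_colouring_def
    using equiv_class_eq[OF equiv_comp_rel] by (auto simp: PiE_iff comp_rel_def intro: quotientI)
  show "(\<lambda>\<sigma>. \<lambda>C\<in>V // comp_rel A. \<sigma> (SOME x. x \<in> C)) ` compatible A \<subseteq> PiE (V // comp_rel A) (\<lambda>_. {1..q})"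
    using some_V unfolding compatible_def colourings_def by (auto simp: PiE_iff)
qed

lemma card_compatible:
  assumes "A \<subseteq> E"
  shows "card (compatible A) = q ^ ncomp V end1 end2 A"
proof -
  have "finite (V // comp_rel A)" using finite_V unfolding quotient_def by auto
  hence "card (PiE (V // comp_rel A) (\<lambda>_. {1..q})) = q ^ card (V // comp_rel A)"
    by (simp add: card_PiE)
  thus ?thesis
    using bij_betw_same_card[OF bij_component_colouring[OF assms]]
    unfolding ncomp_def comp_rel_def by simp
qed

lemma compatible_insert:
  "e \<in> E \<Longrightarrow> compatible (insert e A) = {\<sigma> \<in> compatible A. \<sigma> (end1 e) = \<sigma> (end2 e)}"
  unfolding compatible_def by (auto simp: mem_monochromatic_iff)

lemma compatible_insert_connected:
  assumes "e \<in> E" and "conn end1 end2 A (end1 e) (end2 e)"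
  shows "compatible (insert e A) = compatible A"
proof -
  have "\<sigma> (end1 e) = \<sigma> (end2 e)" if "\<sigma> \<in> compatible A" for \<sigma>
    using that assms(2) colouring_constant_on_components unfolding compatible_def conn_def by blast
  thus ?thesis unfolding compatible_insert[OF assms(1)] by blast
qed

text \<open>Joining two distinct components merges two free colours into one.\<close>

lemma card_compatible_insert_not_connected:
  assumes "A \<subseteq> E" and "e \<in> E" and "\<not> conn end1 end2 A (end1 e) (end2 e)"
  shows "q * card (compatible (insert e A)) = card (compatible A)"
proof -
  define K where "K = V // comp_rel A"
  define C1 where "C1 = comp_rel A `` {end1 e}"
  define C2 where "C2 = comp_rel A `` {end2 e}"
  define B where "B = {\<tau> \<in> PiE K (\<lambda>_. {1..q}). \<tau> C1 = \<tau> C2}"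
  have ends: "end1 e \<in> V" "end2 e \<in> V" using ends_in_V assms(2) by auto
  have C: "C1 \<in> K" "C2 \<in> K" unfolding C1_def C2_def K_def using ends by (auto intro: quotientI)
  have "C1 \<noteq> C2"
  proof
    assume "C1 = C2"
    hence "(end1 e, end2 e) \<in> comp_rel A"
      unfolding C1_def C2_def using equiv_comp_rel ends by (metis eq_equiv_class_iff)
    thus False using assms(3) unfolding conn_def comp_rel_def by auto
  qed
  have bij: "bij_betw (component_colouring A) (PiE K (\<lambda>_. {1..q})) (compatible A)"
    using bij_component_colouring[OF assms(1)] unfolding K_def .
  have ends_colour: "component_colouring A \<tau> (end1 e) = \<tau> C1"
      "component_colouring A \<tau> (end2 e) = \<tau> C2" for \<tau>
    unfolding component_colouring_def C1_def C2_def using ends by auto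
  have "compatible (insert e A) = component_colouring A ` B"
  proof -
    have "compatible A = component_colouring A ` PiE K (\<lambda>_. {1..q})"
      using bij by (simp add: bij_betw_def)
    thus ?thesis unfolding compatible_insert[OF assms(2)] B_def by (simp add: Compr_image_eq ends_colour)
  qed
  hence "card (compatible (insert e A)) = card B"
    using bij unfolding B_def bij_betw_def by (metis (no_types, lifting) card_image inj_on_subset mem_Collect_eq subsetI)
  moreover have "card (PiE K (\<lambda>_. {1..q})) = card B * q"
    using card_PiE_eq_coordinates[OF C \<open>C1 \<noteq> C2\<close>, of "{1..q}"] unfolding B_def by simp
  ultimately show ?thesis using bij_betw_same_card[OF bij] by (simp add: mult.commute)
qed

lemma colour_weight_nonneg: "0 \<le> colour_weight \<sigma>"
  unfolding colour_weight_def using p_less_1 by simp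

lemma colour_weight_mult_bernoulli_weight:
  assumes "A \<subseteq> monochromatic \<sigma>"
  shows "colour_weight \<sigma> * bernoulli_weight p (monochromatic \<sigma>) A = edge_weight A"
proof -
  have "card A \<le> card (monochromatic \<sigma>)" "card (monochromatic \<sigma>) \<le> card E"
    using card_mono[OF finite_monochromatic assms] card_mono[OF finite_E monochromatic_subset] .
  hence "card E - card A = (card E - card (monochromatic \<sigma>)) + (card (monochromatic \<sigma>) - card A)" by simp
  thus ?thesis
    unfolding colour_weight_def bernoulli_weight_def edge_weight_def by (simp add: power_add algebra_simps)
qed

lemma rc_weight_pos: "A \<subseteq> E \<Longrightarrow> 0 < rc_weight A"
  unfolding rc_weight_def edge_weight_def using p_pos p_less_1 q_pos by simp

lemma sum_edge_weight_compatible: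
  "(\<Sum>A\<in>Pow E. edge_weight A * (\<Sum>\<sigma>\<in>compatible A. k \<sigma> A))
    = (\<Sum>\<sigma>\<in>colourings. colour_weight \<sigma> * bernoulli_expect p (monochromatic \<sigma>) (k \<sigma>))"
proof -
  let ?u = "\<lambda>\<sigma> A. if A \<subseteq> monochromatic \<sigma> then bernoulli_weight p (monochromatic \<sigma>) A * k \<sigma> A else 0"
  have "(\<Sum>A\<in>Pow E. edge_weight A * (\<Sum>\<sigma>\<in>compatible A. k \<sigma> A))
      = (\<Sum>A\<in>Pow E. \<Sum>\<sigma>\<in>colourings. colour_weight \<sigma> * ?u \<sigma> A)"
  proof (intro sum.cong refl)
    fix A
    have "edge_weight A * (\<Sum>\<sigma>\<in>compatible A. k \<sigma> A)
        = (\<Sum>\<sigma>\<in>colourings. if A \<subseteq> monochromatic \<sigma> then edge_weight A * k \<sigma> A else 0)"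
      unfolding compatible_def sum_distrib_left by (rule sum.inter_filter[OF finite_colourings])
    also have "\<dots> = (\<Sum>\<sigma>\<in>colourings. colour_weight \<sigma> * ?u \<sigma> A)"
      by (intro sum.cong refl) (simp add: colour_weight_mult_bernoulli_weight flip: mult.assoc)
    finally show "edge_weight A * (\<Sum>\<sigma>\<in>compatible A. k \<sigma> A)
        = (\<Sum>\<sigma>\<in>colourings. colour_weight \<sigma> * ?u \<sigma> A)" .
  qed
  also have "\<dots> = (\<Sum>\<sigma>\<in>colourings. colour_weight \<sigma> * (\<Sum>A\<in>Pow E. ?u \<sigma> A))"
    by (subst sum.swap) (simp add: sum_distrib_left)
  finally show ?thesis by (simp add: bernoulli_expect_eq_sum_Pow[OF finite_E monochromatic_subset])
qed

lemma rc_weight_eq_card_compatible: "A \<subseteq> E \<Longrightarrow> rc_weight A = real (card (compatible A)) * edge_weight A"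
  unfolding rc_weight_def by (simp add: card_compatible)

lemma sum_rc_weight:
  "(\<Sum>A\<in>Pow E. rc_weight A * h A) = (\<Sum>\<sigma>\<in>colourings. colour_weight \<sigma> * bernoulli_expect p (monochromatic \<sigma>) h)"
proof -
  have "(\<Sum>A\<in>Pow E. rc_weight A * h A) = (\<Sum>A\<in>Pow E. edge_weight A * (\<Sum>\<sigma>\<in>compatible A. h A))"
    by (intro sum.cong refl) (simp add: rc_weight_eq_card_compatible)
  thus ?thesis by (simp only: sum_edge_weight_compatible)
qed

lemma weighted_inner_rc_weight:
  "weighted_inner (Pow E) rc_weight f g
    = (\<Sum>\<sigma>\<in>colourings. colour_weight \<sigma> * bernoulli_expect p (monochromatic \<sigma>) (\<lambda>A. f A * g A))"
  unfolding weighted_inner_def sum_rc_weight[symmetric] by (simp add: mult.assoc)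

definition edge_law :: "('v \<Rightarrow> nat) \<Rightarrow> 'e set \<Rightarrow> real"
  where "edge_law \<sigma> A = (if A \<subseteq> monochromatic \<sigma> then bernoulli_weight p (monochromatic \<sigma>) A else 0)"

lemma sum_edge_law: "(\<Sum>A\<in>Pow E. edge_law \<sigma> A * f A) = bernoulli_expect p (monochromatic \<sigma>) f"
  unfolding edge_law_def bernoulli_expect_eq_sum_Pow[OF finite_E monochromatic_subset, symmetric]
  by (intro sum.cong refl) simp

text \<open>Swendsen--Wang is the two-step Gibbs sampler of the Edwards--Sokal coupling; in kernel
  form this means \<open>\<mu>(A) P(A,B) = \<Sum>\<^sub>\<sigma> w(\<sigma>) \<pi>\<^sub>\<sigma>(A) \<pi>\<^sub>\<sigma>(B)\<close>.\<close>

lemma rc_weight_mult_P_SW: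
  "rc_weight A * P_SW V E end1 end2 p q A B
    = (\<Sum>\<sigma>\<in>colourings. colour_weight \<sigma> * edge_law \<sigma> A * edge_law \<sigma> B)"
proof -
  let ?c = "ncomp V end1 end2 A"
  have q: "real q ^ ?c * (1 / real q) ^ ?c = 1"
    using q_pos by (simp add: power_one_over)
  have "rc_weight A * P_SW V E end1 end2 p q A B = (real q ^ ?c * (1 / real q) ^ ?c) *
      (edge_weight A * (p / (1 - p)) ^ card B * (\<Sum>\<sigma>\<in>colourings.
        (1 - p) ^ card (monochromatic \<sigma>) * (if A \<union> B \<subseteq> monochromatic \<sigma> then 1 else 0)))"
    unfolding rc_weight_def P_SW_def colourings_def by (simp only: of_nat_power mult_ac)
  also have "\<dots> = (\<Sum>\<sigma>\<in>colourings. edge_weight A *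
      ((p / (1 - p)) ^ card B * (1 - p) ^ card (monochromatic \<sigma>)
        * (if A \<union> B \<subseteq> monochromatic \<sigma> then 1 else 0)))"
    unfolding q sum_distrib_left by (simp add: mult.assoc)
  also have "\<dots> = (\<Sum>\<sigma>\<in>colourings. colour_weight \<sigma> * edge_law \<sigma> A * edge_law \<sigma> B)"
  proof (intro sum.cong refl)
    fix \<sigma>
    show "edge_weight A * ((p / (1 - p)) ^ card B * (1 - p) ^ card (monochromatic \<sigma>)
        * (if A \<union> B \<subseteq> monochromatic \<sigma> then 1 else 0))
      = colour_weight \<sigma> * edge_law \<sigma> A * edge_law \<sigma> B"
    proof (cases "A \<subseteq> monochromatic \<sigma> \<and> B \<subseteq> monochromatic \<sigma>")
      case True
      have "colour_weight \<sigma> * edge_law \<sigma> A * edge_law \<sigma> B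
          = edge_weight A * bernoulli_weight p (monochromatic \<sigma>) B"
        using True by (simp add: edge_law_def colour_weight_mult_bernoulli_weight)
      thus ?thesis
        using True bernoulli_weight_eq_odds[of B "monochromatic \<sigma>" p] finite_monochromatic p_less_1
        by simp
    qed (auto simp: edge_law_def)
  qed
  finally show ?thesis .
qed

lemma kernel_form_SW:
  "kernel_form (Pow E) rc_weight (P_SW V E end1 end2 p q) f g
    = (\<Sum>\<sigma>\<in>colourings. colour_weight \<sigma> *
        bernoulli_expect p (monochromatic \<sigma>) f * bernoulli_expect p (monochromatic \<sigma>) g)"
  by (subst kernel_form_decompose[where C = colourings and w = colour_weight and u = edge_law])
     (simp_all add: rc_weight_mult_P_SW sum_edge_law)


text \<open>A single-bond step at \<open>e\<close> is a heat-bath update of \<open>e\<close> with opening probability \<open>p\<close>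
  or \<open>p / q\<close>, depending on whether \<open>e\<close> is a bridge.\<close>

lemma sum_g_edge:
  assumes "A \<subseteq> E" and "e \<in> E"
  shows "(\<Sum>B\<in>Pow E. g_edge end1 end2 p q e A B * h B)
    = resample (if conn end1 end2 A (end1 e) (end2 e) then p else p / q) e h A"
proof -
  let ?T = "{insert e A, A - {e}}"
  have "(\<Sum>B\<in>Pow E. g_edge end1 end2 p q e A B * h B) = (\<Sum>B\<in>?T. g_edge end1 end2 p q e A B * h B)"
    using assms finite_E by (intro sum.mono_neutral_right) (auto simp: g_edge_def)
  moreover have "insert e A \<noteq> A - {e}" by auto
  ultimately show ?thesis by (simp add: g_edge_def resample_def)
qed

lemma sum_compatible_resample_within:
  assumes "e \<in> E"
  shows "(\<Sum>\<sigma>\<in>compatible A. resample_within p (monochromatic \<sigma>) e h A)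
    = real (card (compatible (insert e A))) * resample p e h A
      + (real (card (compatible A)) - real (card (compatible (insert e A)))) * h A"
proof -
  have sub: "compatible (insert e A) \<subseteq> compatible A"
    unfolding compatible_insert[OF assms] by blast
  have "(\<Sum>\<sigma>\<in>compatible A. resample_within p (monochromatic \<sigma>) e h A)
      = (\<Sum>\<sigma>\<in>compatible A. if \<sigma> \<in> compatible (insert e A) then resample p e h A else h A)"
    by (intro sum.cong refl)
       (simp add: resample_within_def compatible_insert[OF assms] mem_monochromatic_iff assms)
  also have "\<dots> = (\<Sum>\<sigma>\<in>compatible (insert e A). resample p e h A)
      + (\<Sum>\<sigma>\<in>compatible A - compatible (insert e A). h A)"
    using sub by (simp add: sum.If_cases[OF finite_compatible] Int_absorb1 Diff_eq)
  finally show ?thesis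
    using sub finite_compatible by (simp add: card_Diff_subset of_nat_diff card_mono algebra_simps)
qed

lemma rc_weight_mult_g_edge:
  assumes "A \<subseteq> E" and "e \<in> E"
  shows "rc_weight A * (\<Sum>B\<in>Pow E. g_edge end1 end2 p q e A B * h B)
    = edge_weight A * (\<Sum>\<sigma>\<in>compatible A. resample_within p (monochromatic \<sigma>) e h A)"
proof -
  define N where "N = real (card (compatible A))"
  define N1 where "N1 = real (card (compatible (insert e A)))"
  have rc: "rc_weight A = N * edge_weight A"
    unfolding N_def by (rule rc_weight_eq_card_compatible[OF assms(1)])
  show ?thesis
  proof (cases "conn end1 end2 A (end1 e) (end2 e)")
    case True
    hence "N1 = N" unfolding N1_def N_def using compatible_insert_connected[OF assms(2)] by simp
    thus ?thesis
      using True unfolding rc sum_g_edge[OF assms] sum_compatible_resample_within[OF assms(2)]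
      by (simp add: N_def N1_def)
  next
    case False
    hence "e \<notin> A" using conn_if_mem[of e A end1 end2] by blast
    have "real q * N1 = N"
      unfolding N1_def N_def using card_compatible_insert_not_connected[OF assms False]
      by (metis of_nat_mult)
    hence "N = real q * N1" ..
    thus ?thesis
      using False \<open>e \<notin> A\<close> q_pos
      unfolding rc sum_g_edge[OF assms] sum_compatible_resample_within[OF assms(2)] resample_def
        N_def[symmetric] N1_def[symmetric]
      by (simp add: field_simps)
  qed
qed

lemma kernel_form_g_edge:
  assumes "e \<in> E"
  shows "kernel_form (Pow E) rc_weight (g_edge end1 end2 p q e) f h
    = (\<Sum>\<sigma>\<in>colourings. colour_weight \<sigma> *
        bernoulli_expect p (monochromatic \<sigma>) (\<lambda>A. f A * resample_within p (monochromatic \<sigma>) e h A))"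
proof -
  have "kernel_form (Pow E) rc_weight (g_edge end1 end2 p q e) f h
      = (\<Sum>A\<in>Pow E. edge_weight A * (\<Sum>\<sigma>\<in>compatible A. f A * resample_within p (monochromatic \<sigma>) e h A))"
    unfolding kernel_form_eq_weighted_inner weighted_inner_def
  proof (intro sum.cong refl)
    fix A assume "A \<in> Pow E"
    have "rc_weight A * f A * (\<Sum>B\<in>Pow E. g_edge end1 end2 p q e A B * h B)
        = f A * (rc_weight A * (\<Sum>B\<in>Pow E. g_edge end1 end2 p q e A B * h B))" by (simp only: ac_simps)
    also have "\<dots> = f A * (edge_weight A * (\<Sum>\<sigma>\<in>compatible A. resample_within p (monochromatic \<sigma>) e h A))"
      using rc_weight_mult_g_edge[OF _ assms] \<open>A \<in> Pow E\<close> by simp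
    finally show "rc_weight A * f A * (\<Sum>B\<in>Pow E. g_edge end1 end2 p q e A B * h B)
        = edge_weight A * (\<Sum>\<sigma>\<in>compatible A. f A * resample_within p (monochromatic \<sigma>) e h A)"
      by (simp add: sum_distrib_left ac_simps)
  qed
  thus ?thesis by (simp only: sum_edge_weight_compatible)
qed

lemma kernel_form_SB:
  "kernel_form (Pow E) rc_weight (P_SB E end1 end2 p q) f h
    = (1 / real (card E)) * (\<Sum>e\<in>E. \<Sum>\<sigma>\<in>colourings. colour_weight \<sigma> *
        bernoulli_expect p (monochromatic \<sigma>) (\<lambda>A. f A * resample_within p (monochromatic \<sigma>) e h A))"
proof -
  have P_SB: "P_SB E end1 end2 p q = (\<lambda>A B. (1 / real (card E)) * (\<Sum>e\<in>E. g_edge end1 end2 p q e A B))"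
    unfolding P_SB_def by (intro ext) simp
  show ?thesis unfolding P_SB kernel_form_sum_kernels by (simp only: kernel_form_g_edge cong: sum.cong)
qed


subsection \<open>Comparison of the Dirichlet forms\<close>

lemma card_E_pos: "0 < real (card E)"
  using finite_E E_nonempty by (simp add: card_gt_0_iff)

lemma dirichlet_form_SW:
  "dirichlet_form (Pow E) rc_weight (P_SW V E end1 end2 p q) f
    = (\<Sum>\<sigma>\<in>colourings. colour_weight \<sigma> * bernoulli_var p (monochromatic \<sigma>) f)"
  unfolding dirichlet_form_def weighted_inner_rc_weight kernel_form_SW bernoulli_var_def
  by (simp add: power2_eq_square sum_subtractf right_diff_distrib mult.assoc)

lemma kernel_form_SW_le_SB:
  "kernel_form (Pow E) rc_weight (P_SW V E end1 end2 p q) f f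
    \<le> kernel_form (Pow E) rc_weight (P_SB E end1 end2 p q) f f"
proof -
  have "kernel_form (Pow E) rc_weight (P_SW V E end1 end2 p q) f f
      = (1 / real (card E)) * (\<Sum>e\<in>E. \<Sum>\<sigma>\<in>colourings. colour_weight \<sigma> * (bernoulli_expect p (monochromatic \<sigma>) f)\<^sup>2)"
    unfolding kernel_form_SW using card_E_pos by (simp add: power2_eq_square mult.assoc)
  also have "\<dots> \<le> (1 / real (card E)) * (\<Sum>e\<in>E. \<Sum>\<sigma>\<in>colourings. colour_weight \<sigma> *
      bernoulli_expect p (monochromatic \<sigma>) (\<lambda>A. f A * resample_within p (monochromatic \<sigma>) e f A))"
    using p_pos p_less_1
    by (intro mult_left_mono sum_mono colour_weight_nonneg finite_monochromatic
        square_bernoulli_expect_le_resample_within) auto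
  finally show ?thesis unfolding kernel_form_SB .
qed

text \<open>The comparison \<open>\<D>\<^sub>S\<^sub>W \<le> |E| \<D>\<^sub>S\<^sub>B\<close> is the Efron--Stein inequality for the edge field given
  each colouring, averaged over the colouring.\<close>

lemma dirichlet_form_SW_le_SB:
  "dirichlet_form (Pow E) rc_weight (P_SW V E end1 end2 p q) f
    \<le> real (card E) * dirichlet_form (Pow E) rc_weight (P_SB E end1 end2 p q) f"
proof -
  define D where "D \<sigma> e = bernoulli_expect p (monochromatic \<sigma>) (\<lambda>A. (f A)\<^sup>2)
      - bernoulli_expect p (monochromatic \<sigma>) (\<lambda>A. f A * resample_within p (monochromatic \<sigma>) e f A)" for \<sigma> e
  have "dirichlet_form (Pow E) rc_weight (P_SW V E end1 end2 p q) f
      \<le> (\<Sum>\<sigma>\<in>colourings. colour_weight \<sigma> * (\<Sum>e\<in>E. D \<sigma> e))"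
    unfolding dirichlet_form_SW D_def using p_pos p_less_1
    by (intro sum_mono mult_left_mono colour_weight_nonneg efron_stein_within finite_E monochromatic_subset)
       auto
  also have "\<dots> = (\<Sum>e\<in>E. \<Sum>\<sigma>\<in>colourings. colour_weight \<sigma> * D \<sigma> e)"
    unfolding sum_distrib_left by (rule sum.swap)
  also have "\<dots> = real (card E) * dirichlet_form (Pow E) rc_weight (P_SB E end1 end2 p q) f"
    unfolding D_def dirichlet_form_def weighted_inner_rc_weight kernel_form_SB using card_E_pos
    by (simp add: power2_eq_square right_diff_distrib sum_subtractf)
  finally show ?thesis .
qed

lemma two_configurations: "\<exists>x\<in>Pow E. \<exists>y\<in>Pow E. x \<noteq> y"
  using E_nonempty by blast

lemma dirichlet_form_SW_pos:
  assumes "weighted_inner (Pow E) rc_weight (\<lambda>_. 1) f = 0" and "\<exists>A\<in>Pow E. f A \<noteq> 0"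
  shows "0 < dirichlet_form (Pow E) rc_weight (P_SW V E end1 end2 p q) f"
proof (rule ccontr)
  define \<sigma>\<^sub>0 :: "'v \<Rightarrow> nat" where "\<sigma>\<^sub>0 = (\<lambda>x\<in>V. 1)"
  have mono: "monochromatic \<sigma>\<^sub>0 = E"
    using ends_in_V monochromatic_subset by (auto simp: \<sigma>\<^sub>0_def mem_monochromatic_iff)
  have \<sigma>\<^sub>0: "\<sigma>\<^sub>0 \<in> colourings" "monochromatic \<sigma>\<^sub>0 = E" "colour_weight \<sigma>\<^sub>0 = 1"
    using q_pos mono by (auto simp: \<sigma>\<^sub>0_def colourings_def colour_weight_def)
  have nonneg: "\<forall>\<sigma>\<in>colourings. 0 \<le> colour_weight \<sigma> * bernoulli_var p (monochromatic \<sigma>) f"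
    using p_pos p_less_1 by (auto intro!: mult_nonneg_nonneg colour_weight_nonneg bernoulli_var_nonneg finite_monochromatic)
  have "0 \<le> (\<Sum>\<sigma>\<in>colourings. colour_weight \<sigma> * bernoulli_var p (monochromatic \<sigma>) f)"
    using nonneg by (auto intro: sum_nonneg)
  moreover assume "\<not> ?thesis"
  ultimately have "(\<Sum>\<sigma>\<in>colourings. colour_weight \<sigma> * bernoulli_var p (monochromatic \<sigma>) f) = 0"
    unfolding dirichlet_form_SW by linarith
  hence "colour_weight \<sigma>\<^sub>0 * bernoulli_var p (monochromatic \<sigma>\<^sub>0) f = 0"
    using nonneg \<sigma>\<^sub>0(1) by (simp add: sum_nonneg_eq_0_iff[OF finite_colourings])
  hence "bernoulli_var p E f = 0" using \<sigma>\<^sub>0(2,3) by simp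
  hence const: "f A = bernoulli_expect p E f" if "A \<in> Pow E" for A
    using bernoulli_var_eq_0_imp_const[OF finite_E p_pos p_less_1] that by blast
  have "weighted_inner (Pow E) rc_weight (\<lambda>_. 1) f = bernoulli_expect p E f * (\<Sum>A\<in>Pow E. rc_weight A)"
    unfolding weighted_inner_def sum_distrib_left using const by (intro sum.cong refl) simp
  moreover have "0 < (\<Sum>A\<in>Pow E. rc_weight A)"
    using finite_E rc_weight_pos by (intro sum_pos) auto
  ultimately have "bernoulli_expect p E f = 0" using assms(1) by simp
  thus False using assms(2) const by auto
qed

lemma ergodic_psd_kernel_SW: "ergodic_psd_kernel (Pow E) rc_weight (P_SW V E end1 end2 p q)"
proof
  show "kernel_form (Pow E) rc_weight (P_SW V E end1 end2 p q) f (\<lambda>_. 1)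
      = weighted_inner (Pow E) rc_weight (\<lambda>_. 1) f" for f
    unfolding kernel_form_SW weighted_inner_rc_weight
    by (simp add: bernoulli_expect_const finite_monochromatic)
  show "0 \<le> kernel_form (Pow E) rc_weight (P_SW V E end1 end2 p q) f f" for f
    unfolding kernel_form_SW by (intro sum_nonneg) (simp add: colour_weight_nonneg mult.assoc)
qed (use finite_E rc_weight_pos dirichlet_form_SW_pos two_configurations in
      \<open>auto simp: kernel_form_SW mult.commute mult.left_commute\<close>)

lemma ergodic_psd_kernel_SB: "ergodic_psd_kernel (Pow E) rc_weight (P_SB E end1 end2 p q)"
proof
  show "kernel_form (Pow E) rc_weight (P_SB E end1 end2 p q) f g
      = kernel_form (Pow E) rc_weight (P_SB E end1 end2 p q) g f" for f g
    unfolding kernel_form_SB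
    by (simp only: bernoulli_expect_resample_within_commute[OF finite_monochromatic, where g = f])
  show "kernel_form (Pow E) rc_weight (P_SB E end1 end2 p q) f (\<lambda>_. 1)
      = weighted_inner (Pow E) rc_weight (\<lambda>_. 1) f" for f
    unfolding kernel_form_SB weighted_inner_rc_weight using card_E_pos by simp
  show "0 \<le> kernel_form (Pow E) rc_weight (P_SB E end1 end2 p q) f f" for f
    using ergodic_psd_kernel.form_nonneg[OF ergodic_psd_kernel_SW] kernel_form_SW_le_SB order_trans
    by blast
  show "0 < dirichlet_form (Pow E) rc_weight (P_SB E end1 end2 p q) f"
    if "weighted_inner (Pow E) rc_weight (\<lambda>_. 1) f = 0" "\<exists>A\<in>Pow E. f A \<noteq> 0" for f
  proof -
    have "0 < real (card E) * dirichlet_form (Pow E) rc_weight (P_SB E end1 end2 p q) f"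
      using dirichlet_form_SW_pos[OF that] dirichlet_form_SW_le_SB[of f] by linarith
    thus ?thesis using card_E_pos by (simp add: zero_less_mult_iff)
  qed
qed (use finite_E rc_weight_pos two_configurations in auto)

lemma spectral_gap_SB_le_SW:
  "spectral_gap (Pow E) (P_SB E end1 end2 p q) \<le> spectral_gap (Pow E) (P_SW V E end1 end2 p q)"
  using spectral_gap_comparison[OF ergodic_psd_kernel_SB ergodic_psd_kernel_SW, of 1]
    kernel_form_SW_le_SB unfolding dirichlet_form_def by simp

lemma spectral_gap_SW_le_SB:
  "spectral_gap (Pow E) (P_SW V E end1 end2 p q) \<le> real (card E) * spectral_gap (Pow E) (P_SB E end1 end2 p q)"
  using spectral_gap_comparison[OF ergodic_psd_kernel_SW ergodic_psd_kernel_SB dirichlet_form_SW_le_SB] .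


end

lemma one_le_eight_ln:
  assumes "3 \<le> m"
  shows "1 \<le> 8 * ln (real m)"
proof -
  have "ln (1 / 3 :: real) \<le> 1 / 3 - 1" by (rule ln_le_minus_one) simp
  moreover have "ln (1 / 3 :: real) = - ln 3" by (simp add: ln_div)
  moreover have "ln (3 :: real) \<le> ln (real m)" using assms by simp
  ultimately show ?thesis by linarith
qed

theorem theorem4p8:
  fixes V :: "'v set" and E :: "'e set" and end1 end2 :: "'e \<Rightarrow> 'v"
    and p :: real and q :: nat
  assumes "finite V" and "finite E"
    and "\<forall>e \<in> E. end1 e \<in> V \<and> end2 e \<in> V"
    and "card E \<ge> 3"
    and "0 < p" and "p < 1"
    and "q \<ge> 1"
  shows "spectral_gap (Pow E) (P_SB E end1 end2 p q)
           \<le> spectral_gap (Pow E) (P_SW V E end1 end2 p q)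
       \<and> spectral_gap (Pow E) (P_SW V E end1 end2 p q)
           \<le> 8 * real (card E) * ln (real (card E)) * spectral_gap (Pow E) (P_SB E end1 end2 p q)"
proof -
  have "E \<noteq> {}" using assms(4) by auto
  then interpret random_cluster V E end1 end2 p q
    using assms by unfold_locales auto
  let ?gap_SB = "spectral_gap (Pow E) (P_SB E end1 end2 p q)"
  have "real (card E) * 1 \<le> real (card E) * (8 * ln (real (card E)))"
    using one_le_eight_ln[OF assms(4)] by (intro mult_left_mono) auto
  moreover have "0 < ?gap_SB"
    by (rule ergodic_psd_kernel.spectral_gap_pos[OF ergodic_psd_kernel_SB])
  ultimately have "real (card E) * ?gap_SB \<le> real (card E) * (8 * ln (real (card E))) * ?gap_SB"
    by (intro mult_right_mono) auto
  thus ?thesis using spectral_gap_SB_le_SW spectral_gap_SW_le_SB by (simp add: mult.assoc)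
qed

end
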